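(* Let $d\ge1$, $\alpha\in(0,2)$, assume the standing hypotheses (H1)–(H6) of the context, and let $u$ be the solution of $u_t+L^\alpha[u]=f(x,u)$ in $\mathbb{R}^d\times[0,\infty)$, $u(\cdot,0)=u_0$, where $L^\alpha[u](x)=\int_{\mathbb{R}^d}(u(x)-u(x+y))K(x,y)\,dy$. Then there exist positive constants $B_0>|\lambda_1|$, $c_0<C_0$, and $A_0$ such that for all $(x,t)\in\mathbb{R}^d\times[0,\infty)$, $$\frac{c_0e^{-A_0t}}{1+e^{-|\lambda_1|t}|x|^{d+\alpha}}\le u(x,t)\le\frac{C_0}{1+e^{-B_0t}|x|^{d+\alpha}}.$$
   Context: Standing hypotheses. (H1) $f:\mathbb{R}^d\times\mathbb{R}\to\mathbb{R}$ is $1$-periodic in $x$ for each $u$. (H2) There is $M>0$ such that for all $x$: $s\mapsto f(x,s)/s$ is decreasing, $f(x,0)=0$, $f(x,s)\le0$ for $s\ge M$. (H2') With $\mu(x):=\partial_uf(x,0)$ and $E(x,u):=\mu(x)u-f(x,u)$, there are $\overline m,\overline M>0$ with $\overline mu^2\le E(x,u)\le\overline Mu^2$. (H3) $K$ is positive, $1$-periodic and $C^2$ in $x$, symmetric in $y$. (H4) There is $C_K>0$ such that for $\mathcal K\in\{K,|D_xK|,|D_x^2K|\}$: $C_K^{-1}\le\mathcal K(x,y)|y|^{d+\alpha}\le C_K$ for all $x,y$. (H5) There exist a positive $1$-periodic $e^g$ and $\lambda_1<0$ with $L^\alpha[e^g]-\mu e^g=\lambda_1e^g$. (H6) $u_0\in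 C(\mathbb{R}^d)$ with $\frac{c_1}{1+|x|^{d+\alpha}}\le u_0\le\frac{c_2}{1+|x|^{d+\alpha}}$ for some $c_1,c_2>0$. *)

theory Defs
  imports "HOL-Analysis.Analysis"
begin

text \<open>Points of R^d are vectors of type real^'n, with d = CARD('n).\<close>

definition int_vec :: "real^'n \<Rightarrow> bool" where
  "int_vec k \<longleftrightarrow> (\<forall>i. k $ i \<in> \<int>)"

definition periodic1 :: "(real^'n \<Rightarrow> 'b) \<Rightarrow> bool" where
  "periodic1 g \<longleftrightarrow> (\<forall>x k. int_vec k \<longrightarrow> g (x + k) = g x)"

text \<open>The nonlocal operator L^alpha[v](x) = p.v. int (v x - v (x+y)) K x y dy,
  written (using the symmetry of K in y) in the absolutely convergent symmetrised form.\<close>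
definition Lalpha_integrand ::
  "(real^'n \<Rightarrow> real^'n \<Rightarrow> real) \<Rightarrow> (real^'n \<Rightarrow> real) \<Rightarrow> real^'n \<Rightarrow> real^'n \<Rightarrow> real" where
  "Lalpha_integrand K v x y = (2 * v x - v (x + y) - v (x - y)) * K x y / 2"

definition Lalpha ::
  "(real^'n \<Rightarrow> real^'n \<Rightarrow> real) \<Rightarrow> (real^'n \<Rightarrow> real) \<Rightarrow> real^'n \<Rightarrow> real" where
  "Lalpha K v x = (\<integral>y. Lalpha_integrand K v x y \<partial>lborel)"

definition Lalpha_defined ::
  "(real^'n \<Rightarrow> real^'n \<Rightarrow> real) \<Rightarrow> (real^'n \<Rightarrow> real) \<Rightarrow> real^'n \<Rightarrow> bool" where
  "Lalpha_defined K v x \<longleftrightarrow> integrable lborel (Lalpha_integrand K v x)"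

text \<open>Standing hypotheses (H1), (H2), (H2') on f (plus the standard regularity:
  f continuous and locally Lipschitz in u uniformly in x).\<close>
definition hyp_f :: "(real^'n \<Rightarrow> real \<Rightarrow> real) \<Rightarrow> (real^'n \<Rightarrow> real) \<Rightarrow> bool" where
  "hyp_f f \<mu> \<longleftrightarrow>
     \<comment> \<open>regularity\<close>
     continuous_on UNIV (\<lambda>(x, s). f x s) \<and>
     (\<forall>R>0. \<exists>L. \<forall>x s1 s2. \<bar>s1\<bar> \<le> R \<and> \<bar>s2\<bar> \<le> R \<longrightarrow> \<bar>f x s1 - f x s2\<bar> \<le> L * \<bar>s1 - s2\<bar>) \<and>
     \<comment> \<open>(H1)\<close>
     (\<forall>s. periodic1 (\<lambda>x. f x s)) \<and>
     \<comment> \<open>(H2)\<close>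
     (\<exists>M>0. \<forall>x. f x 0 = 0 \<and> (\<forall>s\<ge>M. f x s \<le> 0) \<and>
        (\<forall>s1 s2. 0 < s1 \<and> s1 < s2 \<longrightarrow> f x s2 / s2 < f x s1 / s1)) \<and>
     \<comment> \<open>(H2'): mu x = d/du f(x,0), E(x,u) = mu x * u - f x u\<close>
     (\<forall>x. (f x has_real_derivative \<mu> x) (at 0)) \<and>
     (\<exists>m M. m > 0 \<and> M > 0 \<and> (\<forall>x u. m * u\<^sup>2 \<le> \<mu> x * u - f x u \<and> \<mu> x * u - f x u \<le> M * u\<^sup>2))"

definition hyp_K :: "real \<Rightarrow> (real^'n \<Rightarrow> real^'n \<Rightarrow> real) \<Rightarrow> bool" where
  "hyp_K \<alpha> K \<longleftrightarrow>
     (\<forall>x y. K x y > 0) \<and>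
     (\<forall>y. periodic1 (\<lambda>x. K x y)) \<and>
     (\<forall>x y. K x (- y) = K x y) \<and>
     (\<exists>DK D2K. (\<forall>x y. ((\<lambda>x. K x y) has_derivative blinfun_apply (DK x y)) (at x)) \<and>
               (\<forall>x y. ((\<lambda>x. DK x y) has_derivative blinfun_apply (D2K x y)) (at x)) \<and>
               (\<forall>y. continuous_on UNIV (\<lambda>x. D2K x y)) \<and>
               (\<exists>CK>0. \<forall>x y. y \<noteq> 0 \<longrightarrow>
                   inverse CK \<le> K x y * norm y powr (real CARD('n) + \<alpha>) \<and>
                   K x y * norm y powr (real CARD('n) + \<alpha>) \<le> CK \<and>
                   norm (DK x y) * norm y powr (real CARD('n) + \<alpha>) \<le> CK \<and>
                   norm (D2K x y) * norm y powr (real CARD('n) + \<alpha>) \<le> CK))"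

definition hyp_eig ::
  "(real^'n \<Rightarrow> real^'n \<Rightarrow> real) \<Rightarrow> (real^'n \<Rightarrow> real) \<Rightarrow> real \<Rightarrow> bool" where
  "hyp_eig K \<mu> lam1 \<longleftrightarrow> lam1 < 0 \<and>
     (\<exists>g :: real^'n \<Rightarrow> real. continuous_on UNIV g \<and> periodic1 g \<and>
        (\<forall>x. Lalpha_defined K (\<lambda>z. exp (g z)) x \<and>
             Lalpha K (\<lambda>z. exp (g z)) x - \<mu> x * exp (g x) = lam1 * exp (g x)))"

definition hyp_u0 :: "real \<Rightarrow> (real^'n \<Rightarrow> real) \<Rightarrow> bool" where
  "hyp_u0 \<alpha> u0 \<longleftrightarrow> continuous_on UNIV u0 \<and>
     (\<exists>c1 c2. c1 > 0 \<and> c2 > 0 \<and> (\<forall>x.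
        c1 / (1 + norm x powr (real CARD('n) + \<alpha>)) \<le> u0 x \<and>
        u0 x \<le> c2 / (1 + norm x powr (real CARD('n) + \<alpha>))))"

definition is_solution ::
  "(real^'n \<Rightarrow> real^'n \<Rightarrow> real) \<Rightarrow> (real^'n \<Rightarrow> real \<Rightarrow> real) \<Rightarrow> (real^'n \<Rightarrow> real)
   \<Rightarrow> (real^'n \<Rightarrow> real \<Rightarrow> real) \<Rightarrow> bool" where
  "is_solution K f u0 u \<longleftrightarrow>
     continuous_on (UNIV \<times> {0..}) (\<lambda>(x, t). u x t) \<and>
     bounded ((\<lambda>(x, t). u x t) ` (UNIV \<times> {0..})) \<and>
     (\<forall>x. u x 0 = u0 x) \<and>
     (\<forall>x t. t > 0 \<longrightarrow>
        Lalpha_defined K (\<lambda>z. u z t) x \<and>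
        (\<exists>ut. ((\<lambda>s. u x s) has_real_derivative ut) (at t) \<and>
              ut + Lalpha K (\<lambda>z. u z t) x = f x (u x t)))"

end

(*
  Both bounds come from comparison with explicit barriers built from the profile
  phi_b(x) = (1 + |b x|^2)^(-p/2), p = d + alpha, which is comparable to 1 / (1 + b^p |x|^p).

  The key estimate is that the kernel-weighted second difference of phi_b is controlled by
  phi_b itself, uniformly in 0 < b <= 1:
    int |2 phi_b(x) - phi_b(x+y) - phi_b(x-y)| |y|^(-p) dy <= C phi_b(x).
  For |y| below the natural scale sqrt(1 + |b x|^2) / b a Taylor bound on the second difference
  is used, for larger |y| the integrability of |y|^(-p) and of phi_b. Hence
  |L^alpha[phi_b]| <= C' phi_b.

  With b = exp(-B t / p) the function C0 phi_b is a supersolution for large B and C0, since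
  f(x, s) <= L s - m s^2 makes large values decay; with b = exp(-|lambda_1| t / p) the function
  c exp(-A t) phi_b is a subsolution for large A.

  The comparison principle on the whole space penalizes with (1 + |x|^2)^(alpha/4), whose
  second difference is bounded below by a function integrable against |y|^(-p).
*)
theory Submission
  imports Defs "HOL-Analysis.Analysis"
begin

section \<open>Integrals of radial powers\<close>

lemma nn_integral_lborel_affine:
  fixes f :: "'a::euclidean_space \<Rightarrow> ennreal" and c :: real
  assumes [measurable]: "f \<in> borel_measurable borel" and c: "c \<noteq> 0"
  shows "(\<integral>\<^sup>+x. f x \<partial>lborel) = ennreal (\<bar>c\<bar>^DIM('a)) * (\<integral>\<^sup>+x. f (t + c *\<^sub>R x) \<partial>lborel)"
  by (subst lborel_affine[OF c, of t]) (simp add: nn_integral_density nn_integral_distr nn_integral_cmult)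

lemma nn_integral_radial_scale:
  fixes f :: "real \<Rightarrow> ennreal" and R :: real
  assumes [measurable]: "f \<in> borel_measurable borel" and R: "R > 0"
  shows "(\<integral>\<^sup>+y. f (norm (y::'a::euclidean_space)) \<partial>lborel) = ennreal (R^DIM('a)) * (\<integral>\<^sup>+y. f (R * norm (y::'a)) \<partial>lborel)"
proof -
  have "(\<integral>\<^sup>+y. f (norm (y::'a)) \<partial>lborel) = ennreal (\<bar>R\<bar>^DIM('a)) * (\<integral>\<^sup>+y. f (norm (0 + R *\<^sub>R (y::'a))) \<partial>lborel)"
    by (rule nn_integral_lborel_affine) (use R in auto)
  also have "(\<lambda>y::'a. f (norm (0 + R *\<^sub>R y))) = (\<lambda>y. f (R * norm y))"
    using R by (auto simp: abs_of_pos)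
  finally show ?thesis using R by (simp add: abs_of_pos)
qed

lemma nn_integral_norm_powr_outer_step:
  fixes s :: real
  defines "A \<equiv> \<lambda>N. (\<integral>\<^sup>+y. indicator {1<..2^N} (norm (y::'a::euclidean_space)) * ennreal (norm y powr s) \<partial>lborel)"
  assumes s: "s < 0"
  shows "A (Suc N) \<le> ennreal (measure lborel (cball (0::'a) 2)) + ennreal (2 powr (s + DIM('a))) * A N"
proof -
  have split: "indicator {1<..2^Suc N} (norm y) * ennreal (norm y powr s) =
     indicator {1<..2} (norm y) * ennreal (norm y powr s) + indicator {2<..2^Suc N} (norm y) * ennreal (norm y powr s)" for y :: 'a
  proof -
    have "(1::real) \<le> 2^N" by simp
    then have "norm y \<le> 2 \<Longrightarrow> norm y \<le> 2*2^N" by linarith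
    then show ?thesis by (cases "norm y \<le> 2") (auto simp: indicator_def)
  qed
  have "A (Suc N) = (\<integral>\<^sup>+y. indicator {1<..2} (norm (y::'a)) * ennreal (norm y powr s) \<partial>lborel)
      + (\<integral>\<^sup>+y. indicator {2<..2^Suc N} (norm (y::'a)) * ennreal (norm y powr s) \<partial>lborel)"
    unfolding A_def split by (rule nn_integral_add) auto
  also have "(\<integral>\<^sup>+y. indicator {1<..2} (norm (y::'a)) * ennreal (norm y powr s) \<partial>lborel) \<le>
     (\<integral>\<^sup>+y. indicator (cball (0::'a) 2) y \<partial>lborel)"
  proof (rule nn_integral_mono)
    fix y :: 'a
    show "indicator {1<..2} (norm y) * ennreal (norm y powr s) \<le> indicator (cball 0 2) y"
    proof (cases "1 < norm y \<and> norm y \<le> 2")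
      case True
      then have "norm y powr s \<le> 1" using powr_mono[of s 0 "norm y"] s by (auto split: if_splits)
      then show ?thesis using True by (auto simp: indicator_def)
    qed (auto simp: indicator_def)
  qed
  also have "(\<integral>\<^sup>+y. indicator (cball (0::'a) 2) y \<partial>lborel) = ennreal (measure lborel (cball (0::'a) 2))"
    using emeasure_lborel_cball_finite[of "0::'a" 2] by (simp add: emeasure_eq_ennreal_measure)
  also have "(\<integral>\<^sup>+y. indicator {2<..2^Suc N} (norm (y::'a)) * ennreal (norm y powr s) \<partial>lborel)
     = ennreal (2^DIM('a)) * (\<integral>\<^sup>+y. indicator {2<..2^Suc N} (2 * norm (y::'a)) * ennreal ((2 * norm y) powr s) \<partial>lborel)"
    by (rule nn_integral_radial_scale[where f="\<lambda>r. indicator {2<..2^Suc N} r * ennreal (r powr s)"]) auto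
  also have "(\<integral>\<^sup>+y. indicator {2<..2^Suc N} (2 * norm (y::'a)) * ennreal ((2 * norm y) powr s) \<partial>lborel)
     = ennreal (2 powr s) * A N"
    unfolding A_def
    by (subst nn_integral_cmult[symmetric]) (auto intro!: nn_integral_cong simp: indicator_def powr_mult ennreal_mult')
  finally show ?thesis
    by (simp add: mult.assoc[symmetric] ennreal_mult'[symmetric] powr_add powr_realpow) (metis mult.commute)
qed

lemma nn_integral_norm_powr_outer_dyadic:
  fixes s :: real
  assumes s: "s < - real DIM('a)"
  shows "(\<integral>\<^sup>+y. indicator {1<..2^N} (norm (y::'a::euclidean_space)) * ennreal (norm y powr s) \<partial>lborel)
     \<le> ennreal (measure lborel (cball (0::'a) 2) / (1 - 2 powr (s + DIM('a))))"
proof (induction N)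
  case 0
  then show ?case by (simp add: indicator_def)
next
  case (Suc N)
  define r where "r = 2 powr (s + DIM('a))"
  define m where "m = measure lborel (cball (0::'a) 2)"
  have r: "0 < r" "r < 1" unfolding r_def using s by (auto intro!: powr_less_one)
  have m: "0 \<le> m" unfolding m_def by simp
  have "(\<integral>\<^sup>+y. indicator {1<..2^Suc N} (norm (y::'a)) * ennreal (norm y powr s) \<partial>lborel)
     \<le> ennreal m + ennreal r * (\<integral>\<^sup>+y. indicator {1<..2^N} (norm (y::'a)) * ennreal (norm y powr s) \<partial>lborel)"
    unfolding m_def r_def by (rule nn_integral_norm_powr_outer_step) (use s in simp)
  also have "\<dots> \<le> ennreal m + ennreal r * ennreal (m / (1 - r))"
    using Suc unfolding m_def r_def by (intro add_left_mono mult_left_mono) auto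
  also have "\<dots> = ennreal (m + r * (m / (1 - r)))"
    using r m by (simp add: ennreal_mult'[symmetric] ennreal_plus[symmetric] del: ennreal_plus)
  also have "m + r * (m / (1 - r)) = m / (1 - r)" using r by (simp add: field_simps)
  finally show ?case unfolding m_def r_def .
qed

lemma nn_integral_norm_powr_outside_unit_ball:
  fixes s :: real
  assumes s: "s < - real DIM('a)"
  shows "(\<integral>\<^sup>+y. indicator {1<..} (norm (y::'a::euclidean_space)) * ennreal (norm y powr s) \<partial>lborel)
     \<le> ennreal (measure lborel (cball (0::'a) 2) / (1 - 2 powr (s + DIM('a))))"
proof -
  let ?f = "\<lambda>N (y::'a). indicator {1<..2^N} (norm y) * ennreal (norm y powr s)"
  have "(\<integral>\<^sup>+y. indicator {1<..} (norm (y::'a)) * ennreal (norm y powr s) \<partial>lborel)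
     \<le> (\<integral>\<^sup>+y. (SUP N. ?f N y) \<partial>lborel)"
  proof (rule nn_integral_mono)
    fix y :: 'a
    show "indicator {1<..} (norm y) * ennreal (norm y powr s) \<le> (SUP N. ?f N y)"
    proof (cases "1 < norm y")
      case True
      obtain N where "norm y \<le> 2^N"
        using real_arch_pow[of 2 "norm y"] by (auto intro: less_imp_le)
      then have "indicator {1<..} (norm y) * ennreal (norm y powr s) = ?f N y"
        using True by (auto simp: indicator_def)
      also have "\<dots> \<le> (SUP N. ?f N y)" by (rule SUP_upper) auto
      finally show ?thesis .
    qed (auto simp: indicator_def)
  qed
  also have "\<dots> = (SUP N. (\<integral>\<^sup>+y. ?f N y \<partial>lborel))"
  proof (rule nn_integral_monotone_convergence_SUP)
    show "incseq ?f"
    proof (rule incseq_SucI, rule le_funI)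
      fix N y
      have "(2::real)^N \<le> 2^Suc N" by simp
      then show "?f N y \<le> ?f (Suc N) y" by (auto simp: indicator_def)
    qed
  qed auto
  also have "\<dots> \<le> ennreal (measure lborel (cball (0::'a) 2) / (1 - 2 powr (s + DIM('a))))"
    by (rule SUP_least) (rule nn_integral_norm_powr_outer_dyadic[OF s])
  finally show ?thesis .
qed

lemma nn_integral_norm_powr_outside_ball:
  fixes s :: real
  assumes s: "s < - real DIM('a)"
  shows "\<exists>C\<ge>0. \<forall>R>0. (\<integral>\<^sup>+y. indicator {R<..} (norm (y::'a::euclidean_space)) * ennreal (norm y powr s) \<partial>lborel)
     \<le> ennreal (R powr (s + DIM('a)) * C)"
proof -
  define C where "C = measure lborel (cball (0::'a) 2) / (1 - 2 powr (s + DIM('a)))"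
  have r: "2 powr (s + DIM('a)) < 1" using s by (intro powr_less_one) auto
  have C: "C \<ge> 0" unfolding C_def using r by simp
  have "(\<integral>\<^sup>+y. indicator {R<..} (norm (y::'a)) * ennreal (norm y powr s) \<partial>lborel)
     \<le> ennreal (R powr (s + DIM('a)) * C)" if R: "R > 0" for R
  proof -
    have "(\<integral>\<^sup>+y. indicator {R<..} (norm (y::'a)) * ennreal (norm y powr s) \<partial>lborel)
       = ennreal (R^DIM('a)) * (\<integral>\<^sup>+y. indicator {R<..} (R * norm (y::'a)) * ennreal ((R * norm y) powr s) \<partial>lborel)"
      by (rule nn_integral_radial_scale[where f="\<lambda>r. indicator {R<..} r * ennreal (r powr s)"]) (use R in auto)
    also have "(\<integral>\<^sup>+y. indicator {R<..} (R * norm (y::'a)) * ennreal ((R * norm y) powr s) \<partial>lborel)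
       = ennreal (R powr s) * (\<integral>\<^sup>+y. indicator {1<..} (norm (y::'a)) * ennreal (norm y powr s) \<partial>lborel)"
      using R by (subst nn_integral_cmult[symmetric]) (auto intro!: nn_integral_cong simp: indicator_def powr_mult ennreal_mult')
    also have "\<dots> \<le> ennreal (R powr s) * ennreal C"
      unfolding C_def by (intro mult_left_mono nn_integral_norm_powr_outside_unit_ball s) auto
    finally have "(\<integral>\<^sup>+y. indicator {R<..} (norm (y::'a)) * ennreal (norm y powr s) \<partial>lborel)
       \<le> ennreal (R^DIM('a)) * (ennreal (R powr s) * ennreal C)"
      by (simp add: mult_left_mono)
    also have "\<dots> = ennreal (R powr (s + DIM('a)) * C)"
      using R C by (simp add: ennreal_mult'[symmetric] powr_add powr_realpow mult_ac)
    finally show ?thesis .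
  qed
  then show ?thesis using C by blast
qed

lemma nn_integral_norm_powr_inner_step:
  fixes s :: real
  defines "A \<equiv> \<lambda>N. (\<integral>\<^sup>+y. indicator {1/2^N<..1} (norm (y::'a::euclidean_space)) * ennreal (norm y powr s) \<partial>lborel)"
  shows "A (Suc N) \<le> ennreal (measure lborel (cball (0::'a) 1) * 2 powr \<bar>s\<bar>) + ennreal ((1/2) powr (s + DIM('a))) * A N"
proof -
  have split: "indicator {1/2^Suc N<..1} (norm y) * ennreal (norm y powr s) =
     indicator {1/2<..1} (norm y) * ennreal (norm y powr s) + indicator {1/2^Suc N<..1/2} (norm y) * ennreal (norm y powr s)" for y :: 'a
  proof -
    have "(1::real) \<le> 2^N" by simp
    then have "1/(2*2^N) \<le> (1/2::real)" by (simp add: field_simps)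
    then have "1/2 < norm y \<Longrightarrow> 1/(2*2^N) < norm y" by linarith
    then show ?thesis by (cases "norm y \<le> 1/2") (auto simp: indicator_def)
  qed
  have "A (Suc N) = (\<integral>\<^sup>+y. indicator {1/2<..1} (norm (y::'a)) * ennreal (norm y powr s) \<partial>lborel)
      + (\<integral>\<^sup>+y. indicator {1/2^Suc N<..1/2} (norm (y::'a)) * ennreal (norm y powr s) \<partial>lborel)"
    unfolding A_def split by (rule nn_integral_add) auto
  also have "(\<integral>\<^sup>+y. indicator {1/2<..1} (norm (y::'a)) * ennreal (norm y powr s) \<partial>lborel) \<le>
     (\<integral>\<^sup>+y. ennreal (2 powr \<bar>s\<bar>) * indicator (cball (0::'a) 1) y \<partial>lborel)"
  proof (rule nn_integral_mono)
    fix y :: 'a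
    show "indicator {1/2<..1} (norm y) * ennreal (norm y powr s) \<le> ennreal (2 powr \<bar>s\<bar>) * indicator (cball 0 1) y"
    proof (cases "1/2 < norm y \<and> norm y \<le> 1")
      case True
      have "norm y powr s \<le> 2 powr \<bar>s\<bar>"
      proof (cases "s \<ge> 0")
        case True
        then have "norm y powr s \<le> 1" using \<open>1/2 < norm y \<and> norm y \<le> 1\<close> using powr_mono2[of s "norm y" 1] by auto
        also have "1 \<le> 2 powr \<bar>s\<bar>" by (rule ge_one_powr_ge_zero) auto
        finally show ?thesis .
      next
        case False
        have "norm y powr s \<le> (1/2) powr s"
          using True False by (intro powr_mono2') auto
        also have "(1/2) powr s = 2 powr \<bar>s\<bar>" using False by (simp add: powr_minus_divide powr_divide)
        finally show ?thesis .
      qed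
      then show ?thesis using True by (auto simp: indicator_def)
    qed (auto simp: indicator_def)
  qed
  also have "(\<integral>\<^sup>+y. ennreal (2 powr \<bar>s\<bar>) * indicator (cball (0::'a) 1) y \<partial>lborel) = ennreal (measure lborel (cball (0::'a) 1) * 2 powr \<bar>s\<bar>)"
  proof -
    have "(\<integral>\<^sup>+y. ennreal (2 powr \<bar>s\<bar>) * indicator (cball (0::'a) 1) y \<partial>lborel) = ennreal (2 powr \<bar>s\<bar>) * emeasure lborel (cball (0::'a) 1)"
      by (subst nn_integral_cmult) (auto intro: borel_measurable_indicator)
    also have "\<dots> = ennreal (2 powr \<bar>s\<bar>) * ennreal (measure lborel (cball (0::'a) 1))"
      using emeasure_lborel_cball_finite[of "0::'a" 1] by (simp add: emeasure_eq_ennreal_measure)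
    finally show ?thesis by (simp add: ennreal_mult'[symmetric] mult.commute)
  qed
  also have "(\<integral>\<^sup>+y. indicator {1/2^Suc N<..1/2} (norm (y::'a)) * ennreal (norm y powr s) \<partial>lborel)
     = ennreal ((1/2)^DIM('a)) * (\<integral>\<^sup>+y. indicator {1/2^Suc N<..1/2} (1/2 * norm (y::'a)) * ennreal ((1/2 * norm y) powr s) \<partial>lborel)"
    by (rule nn_integral_radial_scale[where f="\<lambda>r. indicator {1/2^Suc N<..1/2} r * ennreal (r powr s)"]) auto
  also have "(\<integral>\<^sup>+y. indicator {1/2^Suc N<..1/2} (1/2 * norm (y::'a)) * ennreal ((1/2 * norm y) powr s) \<partial>lborel)
     = ennreal ((1/2) powr s) * A N"
    unfolding A_def
    by (subst nn_integral_cmult[symmetric]) (auto intro!: nn_integral_cong simp: indicator_def powr_divide ennreal_mult'[symmetric])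
  finally show ?thesis
    by (simp add: mult.assoc[symmetric] ennreal_mult'[symmetric] powr_add powr_realpow) (metis mult.commute)
qed

lemma nn_integral_norm_powr_inner_dyadic:
  fixes s :: real
  assumes s: "s > - real DIM('a)"
  shows "(\<integral>\<^sup>+y. indicator {1/2^N<..1} (norm (y::'a::euclidean_space)) * ennreal (norm y powr s) \<partial>lborel)
     \<le> ennreal (measure lborel (cball (0::'a) 1) * 2 powr \<bar>s\<bar> / (1 - (1/2) powr (s + DIM('a))))"
proof (induction N)
  case 0
  then show ?case by (simp add: indicator_def)
next
  case (Suc N)
  define r where "r = (1/2::real) powr (s + DIM('a))"
  define m where "m = measure lborel (cball (0::'a) 1) * 2 powr \<bar>s\<bar>"
  have r: "0 < r" "r < 1" unfolding r_def using s powr_less_mono'[of "1/2::real" 0 "s + DIM('a)"] by auto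
  have m: "0 \<le> m" unfolding m_def by simp
  have "(\<integral>\<^sup>+y. indicator {1/2^Suc N<..1} (norm (y::'a)) * ennreal (norm y powr s) \<partial>lborel)
     \<le> ennreal m + ennreal r * (\<integral>\<^sup>+y. indicator {1/2^N<..1} (norm (y::'a)) * ennreal (norm y powr s) \<partial>lborel)"
    unfolding m_def r_def by (rule nn_integral_norm_powr_inner_step)
  also have "\<dots> \<le> ennreal m + ennreal r * ennreal (m / (1 - r))"
    using Suc unfolding m_def r_def by (intro add_left_mono mult_left_mono) auto
  also have "\<dots> = ennreal (m + r * (m / (1 - r)))"
    using r m by (simp add: ennreal_mult'[symmetric] ennreal_plus[symmetric] del: ennreal_plus)
  also have "m + r * (m / (1 - r)) = m / (1 - r)" using r by (simp add: field_simps)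
  finally show ?case unfolding m_def r_def .
qed

lemma nn_integral_norm_powr_inside_unit_ball:
  fixes s :: real
  assumes s: "s > - real DIM('a)"
  shows "(\<integral>\<^sup>+y. indicator {..1} (norm (y::'a::euclidean_space)) * ennreal (norm y powr s) \<partial>lborel)
     \<le> ennreal (measure lborel (cball (0::'a) 1) * 2 powr \<bar>s\<bar> / (1 - (1/2) powr (s + DIM('a))))"
proof -
  let ?f = "\<lambda>N (y::'a). indicator {1/2^N<..1} (norm y) * ennreal (norm y powr s)"
  have "(\<integral>\<^sup>+y. indicator {..1} (norm (y::'a)) * ennreal (norm y powr s) \<partial>lborel)
     \<le> (\<integral>\<^sup>+y. (SUP N. ?f N y) \<partial>lborel)"
  proof (rule nn_integral_mono)
    fix y :: 'a
    show "indicator {..1} (norm y) * ennreal (norm y powr s) \<le> (SUP N. ?f N y)"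
    proof (cases "0 < norm y \<and> norm y \<le> 1")
      case True
      obtain N where N: "1 / norm y < 2^N"
        using real_arch_pow[of 2 "1 / norm y"] by auto
      then have "1/2^N < norm y" using True by (simp add: field_simps)
      then have "indicator {..1} (norm y) * ennreal (norm y powr s) = ?f N y"
        using True by (auto simp: indicator_def)
      also have "\<dots> \<le> (SUP N. ?f N y)" by (rule SUP_upper) auto
      finally show ?thesis .
    qed (auto simp: indicator_def)
  qed
  also have "\<dots> = (SUP N. (\<integral>\<^sup>+y. ?f N y \<partial>lborel))"
  proof (rule nn_integral_monotone_convergence_SUP)
    show "incseq ?f"
    proof (rule incseq_SucI, rule le_funI)
      fix N y
      have "(1::real)/2^Suc N \<le> 1/2^N" by (simp add: field_simps)
      then show "?f N y \<le> ?f (Suc N) y" by (auto simp: indicator_def)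
    qed
  qed auto
  also have "\<dots> \<le> ennreal (measure lborel (cball (0::'a) 1) * 2 powr \<bar>s\<bar> / (1 - (1/2) powr (s + DIM('a))))"
    by (rule SUP_least) (rule nn_integral_norm_powr_inner_dyadic[OF s])
  finally show ?thesis .
qed

lemma nn_integral_norm_powr_inside_ball:
  fixes s :: real
  assumes s: "s > - real DIM('a)"
  shows "\<exists>C\<ge>0. \<forall>R>0. (\<integral>\<^sup>+y. indicator {..R} (norm (y::'a::euclidean_space)) * ennreal (norm y powr s) \<partial>lborel)
     \<le> ennreal (R powr (s + DIM('a)) * C)"
proof -
  define C where "C = measure lborel (cball (0::'a) 1) * 2 powr \<bar>s\<bar> / (1 - (1/2) powr (s + DIM('a)))"
  have r: "(1/2::real) powr (s + DIM('a)) < 1" using s powr_less_mono'[of "1/2::real" 0 "s + DIM('a)"] by auto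
  have C: "C \<ge> 0" unfolding C_def using r by simp
  have "(\<integral>\<^sup>+y. indicator {..R} (norm (y::'a)) * ennreal (norm y powr s) \<partial>lborel)
     \<le> ennreal (R powr (s + DIM('a)) * C)" if R: "R > 0" for R
  proof -
    have "(\<integral>\<^sup>+y. indicator {..R} (norm (y::'a)) * ennreal (norm y powr s) \<partial>lborel)
       = ennreal (R^DIM('a)) * (\<integral>\<^sup>+y. indicator {..R} (R * norm (y::'a)) * ennreal ((R * norm y) powr s) \<partial>lborel)"
      by (rule nn_integral_radial_scale[where f="\<lambda>r. indicator {..R} r * ennreal (r powr s)"]) (use R in auto)
    also have "(\<integral>\<^sup>+y. indicator {..R} (R * norm (y::'a)) * ennreal ((R * norm y) powr s) \<partial>lborel)
       = ennreal (R powr s) * (\<integral>\<^sup>+y. indicator {..1} (norm (y::'a)) * ennreal (norm y powr s) \<partial>lborel)"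
      using R by (subst nn_integral_cmult[symmetric]) (auto intro!: nn_integral_cong simp: indicator_def powr_mult ennreal_mult')
    also have "\<dots> \<le> ennreal (R powr s) * ennreal C"
      unfolding C_def by (intro mult_left_mono nn_integral_norm_powr_inside_unit_ball s) auto
    finally have "(\<integral>\<^sup>+y. indicator {..R} (norm (y::'a)) * ennreal (norm y powr s) \<partial>lborel)
       \<le> ennreal (R^DIM('a)) * (ennreal (R powr s) * ennreal C)"
      by (simp add: mult_left_mono)
    also have "\<dots> = ennreal (R powr (s + DIM('a)) * C)"
      using R C by (simp add: ennreal_mult'[symmetric] powr_add powr_realpow mult_ac)
    finally show ?thesis .
  qed
  then show ?thesis using C by blast
qed

section \<open>Symmetric second differences\<close>

definition second_diff :: "('a::real_vector \<Rightarrow> real) \<Rightarrow> 'a \<Rightarrow> 'a \<Rightarrow> real" where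
  "second_diff v x y = 2 * v x - v (x + y) - v (x - y)"

lemma symmetric_difference_le_deriv2_bound:
  fixes g g' g'' :: "real \<Rightarrow> real" and L :: real
  assumes d1: "\<And>s. \<bar>s\<bar> \<le> 1 \<Longrightarrow> (g has_real_derivative g' s) (at s)"
    and d2: "\<And>s. \<bar>s\<bar> \<le> 1 \<Longrightarrow> (g' has_real_derivative g'' s) (at s)"
    and b: "\<And>s. \<bar>s\<bar> \<le> 1 \<Longrightarrow> \<bar>g'' s\<bar> \<le> L"
  shows "\<bar>g 1 + g (-1) - 2 * g 0\<bar> \<le> 2 * L"
proof -
  have L: "0 \<le> L" using b[of 0] by simp
  have gp: "\<bar>g' s - g' (-s)\<bar> \<le> 2 * s * L" if s: "0 < s" "s \<le> 1" for s
  proof -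
    obtain z where z: "-s < z" "z < s" "g' s - g' (-s) = (s - (-s)) * g'' z"
      using MVT2[of "-s" s g' g''] s d2 by fastforce
    have "\<bar>g'' z\<bar> \<le> L" using z s by (intro b) auto
    then show ?thesis using z s by (simp add: abs_mult)
  qed
  define F where "F s = g s + g (-s)" for s
  define F' where "F' s = g' s - g' (-s)" for s
  have dF: "(F has_real_derivative F' s) (at s)" if "0 \<le> s" "s \<le> 1" for s
  proof -
    have "((\<lambda>s. g (-s)) has_real_derivative g' (-s) * (-1)) (at s)"
      using that by (intro DERIV_chain2[OF d1]) (auto intro!: derivative_eq_intros)
    then show ?thesis unfolding F_def F'_def
      using d1[of s] that by (auto intro!: derivative_eq_intros)
  qed
  obtain z where z: "0 < z" "z < 1" "F 1 - F 0 = (1 - 0) * F' z"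
    using MVT2[of 0 1 F F'] dF by fastforce
  have "\<bar>F' z\<bar> \<le> 2 * z * L" unfolding F'_def using gp z by auto
  also have "\<dots> \<le> 2 * L" using z L by (simp add: mult_left_le_one_le)
  finally show ?thesis using z unfolding F_def by simp
qed

lemma symmetric_difference_quadratic_powr:
  fixes aa bb cc \<gamma> M :: real
  assumes cc: "cc \<ge> 0" and aa: "aa \<ge> 0" and CS: "bb^2 \<le> aa * cc"
    and Mb: "\<And>s. \<bar>s\<bar> \<le> 1 \<Longrightarrow> (1 + aa + 2*bb* s + cc* s^2) powr (\<gamma> - 1) \<le> M"
  shows "\<bar>(1+aa+2*bb+cc) powr \<gamma> + (1+aa-2*bb+cc) powr \<gamma> - 2*(1+aa) powr \<gamma>\<bar>
      \<le> 2 * ((4*\<bar>\<gamma>*(\<gamma>-1)\<bar> + 2*\<bar>\<gamma>\<bar>) * cc * M)"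
proof -
  define Q where "Q s = 1 + aa + 2*bb* s + cc* s^2" for s
  have nonneg: "0 \<le> aa + 2*bb* s + cc* s^2" for s
  proof (cases "cc = 0")
    case True
    then have "bb = 0" using CS by simp
    then show ?thesis using True aa by simp
  next
    case False
    then have Cp: "cc > 0" using cc by simp
    have "cc * (aa + 2*bb* s + cc* s^2) = (cc* s+bb)^2 + (aa*cc - bb^2)" by (simp add: power2_eq_square algebra_simps)
    also have "\<dots> \<ge> 0" using CS by simp
    finally show ?thesis using Cp by (simp add: zero_le_mult_iff)
  qed
  have Q1: "1 \<le> Q s" for s unfolding Q_def using nonneg[of s] by simp
  have key: "(bb + cc* s)^2 \<le> cc * Q s" for s
  proof -
    have "(bb + cc* s)^2 = bb^2 + cc*(2*bb* s + cc* s^2)" by (simp add: power2_eq_square algebra_simps)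
    also have "\<dots> \<le> aa*cc + cc*(2*bb* s + cc* s^2)" using CS by simp
    also have "\<dots> = cc * (aa + 2*bb* s + cc* s^2)" by (simp add: algebra_simps)
    also have "\<dots> \<le> cc * Q s" unfolding Q_def using cc by (intro mult_left_mono) auto
    finally show ?thesis .
  qed
  define g where "g s = Q s powr \<gamma>" for s
  define g' where "g' s = \<gamma> * Q s powr (\<gamma> - 1) * (2*bb + 2*cc* s)" for s
  define g'' where "g'' s = \<gamma> * ((\<gamma> - 1) * Q s powr (\<gamma> - 2) * (2*bb + 2*cc* s)) * (2*bb + 2*cc* s) + \<gamma> * Q s powr (\<gamma> - 1) * (2*cc)" for s
  have dQ: "(Q has_real_derivative (2*bb + 2*cc* s)) (at s)" for s
    unfolding Q_def by (auto intro!: derivative_eq_intros)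
  have d1: "(g has_real_derivative g' s) (at s)" for s
  proof -
    have "((\<lambda>s. Q s powr \<gamma>) has_real_derivative \<gamma> * Q s powr (\<gamma> - of_nat 1) * (2*bb + 2*cc* s)) (at s)"
      by (rule DERIV_fun_powr[OF dQ]) (use Q1[of s] in simp)
    then show ?thesis unfolding g_def g'_def by simp
  qed
  have d2: "(g' has_real_derivative g'' s) (at s)" for s
  proof -
    have p: "((\<lambda>s. Q s powr (\<gamma> - 1)) has_real_derivative (\<gamma> - 1) * Q s powr (\<gamma> - 1 - of_nat 1) * (2*bb + 2*cc* s)) (at s)"
      by (rule DERIV_fun_powr[OF dQ]) (use Q1[of s] in simp)
    have "((\<lambda>s. \<gamma> * Q s powr (\<gamma> - 1) * (2*bb + 2*cc* s)) has_real_derivative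
        \<gamma> * ((\<gamma> - 1) * Q s powr (\<gamma> - 1 - of_nat 1) * (2*bb + 2*cc* s)) * (2*bb + 2*cc* s) + \<gamma> * Q s powr (\<gamma> - 1) * (2*cc)) (at s)"
      by (rule derivative_eq_intros p refl | simp)+
    then show ?thesis unfolding g'_def g''_def by (simp add: algebra_simps)
  qed
  let ?K = "(4*\<bar>\<gamma>*(\<gamma>-1)\<bar> + 2*\<bar>\<gamma>\<bar>) * cc * M"
  have b: "\<bar>g'' s\<bar> \<le> ?K" if s: "\<bar>s\<bar> \<le> 1" for s
  proof -
    have Qp: "Q s > 0" using Q1[of s] by simp
    have e: "Q s powr (\<gamma> - 2) * Q s = Q s powr (\<gamma> - 1)"
      using powr_add[of "Q s" "\<gamma> - 2" 1] Qp by simp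
    have sq: "(2*bb + 2*cc* s) * (2*bb + 2*cc* s) = 4 * (bb + cc* s)^2" by (simp add: power2_eq_square algebra_simps)
    have gg: "g'' s = \<gamma> * (\<gamma> - 1) * Q s powr (\<gamma> - 2) * (4 * (bb + cc * s)^2) + \<gamma> * Q s powr (\<gamma> - 1) * (2*cc)"
      unfolding g''_def sq[symmetric] by (simp add: algebra_simps)
    have "\<bar>g'' s\<bar> \<le> \<bar>\<gamma> * (\<gamma> - 1) * Q s powr (\<gamma> - 2) * (4 * (bb + cc * s)^2)\<bar> + \<bar>\<gamma> * Q s powr (\<gamma> - 1) * (2*cc)\<bar>"
      unfolding gg by (rule abs_triangle_ineq)
    also have "\<dots> = \<bar>\<gamma> * (\<gamma> - 1)\<bar> * Q s powr (\<gamma> - 2) * (4 * (bb + cc * s)^2) + \<bar>\<gamma>\<bar> * Q s powr (\<gamma> - 1) * (2*cc)"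
      using cc Qp by (simp add: abs_mult)
    also have "\<dots> \<le> \<bar>\<gamma> * (\<gamma> - 1)\<bar> * Q s powr (\<gamma> - 2) * (4 * (cc * Q s)) + \<bar>\<gamma>\<bar> * Q s powr (\<gamma> - 1) * (2*cc)"
      using key[of s] by (intro add_mono mult_left_mono) auto
    also have "\<dots> = (4*\<bar>\<gamma>*(\<gamma>-1)\<bar> + 2*\<bar>\<gamma>\<bar>) * cc * Q s powr (\<gamma> - 1)"
      using e by (simp add: algebra_simps)
    also have "\<dots> \<le> ?K"
      using Mb[OF s] cc unfolding Q_def by (intro mult_left_mono) auto
    finally show ?thesis .
  qed
  have "\<bar>g 1 + g (-1) - 2 * g 0\<bar> \<le> 2 * ?K"
    by (rule symmetric_difference_le_deriv2_bound[OF d1 d2 b])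
  then show ?thesis unfolding g_def Q_def by simp
qed

lemma power2_norm_add_scaleR:
  fixes z w :: "'a::real_inner"
  shows "norm (z + s *\<^sub>R w)^2 = norm z^2 + 2 * (z \<bullet> w) * s + norm w^2 * s^2"
  unfolding power2_norm_eq_inner by (simp add: inner_add_left inner_add_right inner_commute algebra_simps power2_eq_square)

lemma symmetric_difference_bracket_powr:
  fixes z w :: "'a::real_inner" and \<gamma> M :: real
  assumes Mb: "\<And>s. \<bar>s\<bar> \<le> 1 \<Longrightarrow> (1 + norm (z + s *\<^sub>R w)^2) powr (\<gamma> - 1) \<le> M"
  shows "\<bar>(1 + norm (z + w)^2) powr \<gamma> + (1 + norm (z - w)^2) powr \<gamma> - 2 * (1 + norm z^2) powr \<gamma>\<bar>
     \<le> 2 * ((4*\<bar>\<gamma>*(\<gamma>-1)\<bar> + 2*\<bar>\<gamma>\<bar>) * norm w^2 * M)"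
proof -
  have CS: "(z \<bullet> w)^2 \<le> norm z^2 * norm w^2"
  proof -
    have "\<bar>z \<bullet> w\<bar> \<le> norm z * norm w" by (rule Cauchy_Schwarz_ineq2)
    then have "\<bar>z \<bullet> w\<bar>^2 \<le> (norm z * norm w)^2" by (intro power_mono) auto
    then show ?thesis by (simp add: power_mult_distrib)
  qed
  have "\<bar>(1 + norm z^2 + 2*(z \<bullet> w) + norm w^2) powr \<gamma> + (1 + norm z^2 - 2*(z \<bullet> w) + norm w^2) powr \<gamma> - 2*(1 + norm z^2) powr \<gamma>\<bar>
     \<le> 2 * ((4*\<bar>\<gamma>*(\<gamma>-1)\<bar> + 2*\<bar>\<gamma>\<bar>) * norm w^2 * M)"
  proof (rule symmetric_difference_quadratic_powr)
    show "(z \<bullet> w)^2 \<le> norm z^2 * norm w^2" by (rule CS)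
    fix s :: real assume "\<bar>s\<bar> \<le> 1"
    then have "(1 + norm (z + s *\<^sub>R w)^2) powr (\<gamma> - 1) \<le> M" by (rule Mb)
    then show "(1 + norm z^2 + 2*(z \<bullet> w) * s + norm w^2 * s^2) powr (\<gamma> - 1) \<le> M"
      by (simp add: power2_norm_add_scaleR add.assoc)
  qed auto
  moreover have "norm (z + w)^2 = norm z^2 + 2*(z \<bullet> w) + norm w^2"
    using power2_norm_add_scaleR[of z 1 w] by simp
  moreover have "norm (z - w)^2 = norm z^2 - 2*(z \<bullet> w) + norm w^2"
    using power2_norm_add_scaleR[of z "-1" w] by simp
  ultimately show ?thesis by (simp add: add.assoc add_diff_eq diff_add_eq)
qed

lemma bracket_segment_lower:
  fixes z w :: "'a::real_normed_vector"
  assumes w: "norm w^2 \<le> (1 + norm z^2) / 4" and s: "\<bar>s\<bar> \<le> 1"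
  shows "(1 + norm z^2) / 4 \<le> 1 + norm (z + s *\<^sub>R w)^2"
proof -
  let ?u = "z + s *\<^sub>R w"
  have "norm z \<le> norm ?u + norm (s *\<^sub>R w)" by (metis add_diff_cancel_right' norm_triangle_ineq4)
  also have "norm (s *\<^sub>R w) \<le> norm w" using s by (simp add: mult_left_le_one_le)
  finally have nz: "norm z \<le> norm ?u + norm w" by simp
  have "norm z^2 \<le> (norm ?u + norm w)^2" using nz by (intro power_mono) auto
  also have "\<dots> \<le> 2 * norm ?u^2 + 2 * norm w^2"
  proof -
    have eq: "(norm ?u + norm w)^2 = 2 * norm ?u^2 + 2 * norm w^2 - (norm ?u - norm w)^2"
      by (simp add: power2_eq_square algebra_simps)
    have "0 \<le> (norm ?u - norm w)^2" by simp
    then show ?thesis unfolding eq by linarith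
  qed
  finally show ?thesis using w by simp
qed

section \<open>The barrier profile\<close>

definition profile :: "real \<Rightarrow> real \<Rightarrow> 'a::real_normed_vector \<Rightarrow> real" where
  "profile p b x = (1 + (b * norm x)^2) powr (-p/2)"

lemma profile_pos: "profile p b x > 0"
proof -
  have "1 + (b * norm x)^2 > 0" by (simp add: add_pos_nonneg)
  then show ?thesis unfolding profile_def by simp
qed

lemma profile_measurable [measurable]: "(\<lambda>y. ennreal (profile p b (y::'a::euclidean_space))) \<in> borel_measurable borel"
  unfolding profile_def by measurable

lemma profile_scaleR: "b \<ge> 0 \<Longrightarrow> profile p b x = (1 + norm (b *\<^sub>R x)^2) powr (-p/2)"
  unfolding profile_def by (simp add: power_mult_distrib)

lemma profile_le_1: "p \<ge> 0 \<Longrightarrow> profile p b x \<le> 1"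
proof -
  assume p: "p \<ge> 0"
  have "(1 + (b * norm x)^2) powr (-p/2) \<le> 1 powr (-p/2)" using p by (intro powr_mono2') auto
  then show ?thesis unfolding profile_def by simp
qed

lemma powr_bracket_lower:
  fixes s p :: real
  assumes s: "s \<ge> 0" and p: "p > 0"
  shows "(1 + s powr p) / 2 \<le> (1 + s^2) powr (p/2)"
proof -
  have a: "1 \<le> (1 + s^2) powr (p/2)" using p by (intro ge_one_powr_ge_zero) auto
  have "s powr p = (s^2) powr (p/2)"
  proof (cases "s = 0")
    case True then show ?thesis using p by simp
  next
    case False
    then have e: "s^2 = s powr 2" using s by (simp add: powr_numeral)
    show ?thesis unfolding e powr_powr by simp
  qed
  also have "\<dots> \<le> (1 + s^2) powr (p/2)" using p by (intro powr_mono2) auto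
  finally show ?thesis using a by simp
qed

lemma powr_bracket_upper:
  fixes s p :: real
  assumes s: "s \<ge> 0" and p: "p > 0"
  shows "(1 + s^2) powr (p/2) \<le> 2 powr (p/2) * (1 + s powr p)"
proof (cases "s \<le> 1")
  case True
  have "(1 + s^2) powr (p/2) \<le> 2 powr (p/2)" using True s p
    by (intro powr_mono2) (auto simp: power_le_one)
  also have "\<dots> \<le> 2 powr (p/2) * (1 + s powr p)" by simp
  finally show ?thesis .
next
  case False
  have "(1 + s^2) powr (p/2) \<le> (2 * s^2) powr (p/2)" using False p
    by (intro powr_mono2) (auto simp: power_le_one less_le_not_le one_le_power)
  also have "(2 * s^2) powr (p/2) = 2 powr (p/2) * s powr p"
  proof -
    have "(s^2) powr (p/2) = s powr p"
    proof -
      have e: "s^2 = s powr 2" using False by (simp add: powr_numeral)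
      show ?thesis unfolding e powr_powr by simp
    qed
    then show ?thesis by (simp add: powr_mult)
  qed
  also have "\<dots> \<le> 2 powr (p/2) * (1 + s powr p)" by simp
  finally show ?thesis .
qed

lemma profile_le_inverse_bracket:
  assumes b: "b > 0" and p: "p > 0"
  shows "profile p b x \<le> 2 / (1 + b powr p * norm x powr p)"
proof -
  have s: "(b * norm x) powr p = b powr p * norm x powr p" using b by (simp add: powr_mult)
  have l: "(1 + (b * norm x) powr p) / 2 \<le> (1 + (b * norm x)^2) powr (p/2)"
    by (rule powr_bracket_lower) (use b p in auto)
  have P2: "0 < 1 + (b * norm x) powr p" by (simp add: add_pos_nonneg)
  have "1 + (b * norm x)^2 \<noteq> 0" by (smt (verit) zero_le_power2)
  then have P1: "0 < (1 + (b * norm x)^2) powr (p/2)" by simp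
  have "profile p b x = 1 / (1 + (b * norm x)^2) powr (p/2)" unfolding profile_def by (simp add: powr_minus_divide)
  also have "\<dots> \<le> 1 / ((1 + (b * norm x) powr p) / 2)" using l P1 P2 by (intro divide_left_mono) auto
  also have "\<dots> = 2 / (1 + b powr p * norm x powr p)" unfolding s by simp
  finally show ?thesis .
qed

lemma inverse_bracket_le_profile:
  assumes b: "b > 0" and p: "p > 0"
  shows "1 / (2 powr (p/2) * (1 + b powr p * norm x powr p)) \<le> profile p b x"
proof -
  have s: "(b * norm x) powr p = b powr p * norm x powr p" using b by (simp add: powr_mult)
  have l: "(1 + (b * norm x)^2) powr (p/2) \<le> 2 powr (p/2) * (1 + (b * norm x) powr p)"
    by (rule powr_bracket_upper) (use b p in auto)
  have "1 + (b * norm x)^2 \<noteq> 0" by (smt (verit) zero_le_power2)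
  then have P1: "0 < (1 + (b * norm x)^2) powr (p/2)" by simp
  have P2: "0 < 1 + (b * norm x) powr p" by (simp add: add_pos_nonneg)
  have "1 / (2 powr (p/2) * (1 + b powr p * norm x powr p)) = 1 / (2 powr (p/2) * (1 + (b * norm x) powr p))" unfolding s ..
  also have "\<dots> \<le> 1 / (1 + (b * norm x)^2) powr (p/2)" using l P1 P2 by (intro divide_left_mono) auto
  also have "\<dots> = profile p b x" unfolding profile_def by (simp add: powr_minus_divide)
  finally show ?thesis .
qed

lemma exp_divide_powr:
  fixes p B t :: real
  assumes "p > 0" shows "exp (- B / p * t) powr p = exp (- B * t)"
proof -
  have "exp (- B / p * t) powr p = exp ((- B / p * t) * p)" by (rule exp_powr_real)
  also have "(- B / p * t) * p = - B * t" using assms by simp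
  finally show ?thesis .
qed

lemma profile_exp_le:
  assumes "p > 0"
  shows "profile p (exp (- B / p * t)) x \<le> 2 / (1 + exp (- B * t) * norm x powr p)"
  using profile_le_inverse_bracket[of "exp (- B / p * t)" p x] exp_divide_powr[of p B t] assms by simp

lemma profile_exp_ge:
  assumes "p > 0"
  shows "1 / (2 powr (p/2) * (1 + exp (- B * t) * norm x powr p)) \<le> profile p (exp (- B / p * t)) x"
  using inverse_bracket_le_profile[of "exp (- B / p * t)" p x] exp_divide_powr[of p B t] assms by simp

lemma profile_time_deriv:
  fixes x :: "'a::real_normed_vector"
  shows "((\<lambda>t. profile p (exp (a * t)) x) has_real_derivative
     (- a * p) * profile p (exp (a * t)) x * ((exp (a * t) * norm x)^2 / (1 + (exp (a * t) * norm x)^2))) (at t)"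
proof -
  let ?W = "\<lambda>t. 1 + (exp (a * t) * norm x)^2"
  have W: "?W t > 0" by (simp add: add_pos_nonneg)
  have dW: "(?W has_real_derivative 2 * a * (exp (a * t) * norm x)^2) (at t)"
    by (auto intro!: derivative_eq_intros simp: power2_eq_square algebra_simps)
  have "((\<lambda>t. ?W t powr (-p/2)) has_real_derivative (-p/2) * ?W t powr (-p/2 - of_nat 1) * (2 * a * (exp (a * t) * norm x)^2)) (at t)"
    by (rule DERIV_fun_powr[OF dW W])
  moreover have "?W t powr (-p/2 - 1) = ?W t powr (-p/2) / ?W t"
    using W by (simp add: powr_diff)
  ultimately show ?thesis unfolding profile_def by (simp add: field_simps)
qed

lemma profile_exp_time_deriv:
  fixes x :: "'a::real_normed_vector"
  assumes "p > 0"
  shows "((\<lambda>t. profile p (exp (- B / p * t)) x) has_real_derivative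
     B * profile p (exp (- B / p * t)) x *
     ((exp (- B / p * t) * norm x)^2 / (1 + (exp (- B / p * t) * norm x)^2))) (at t)"
  using profile_time_deriv[of p "- B / p" x t] assms by simp

lemma continuous_on_profile_exp:
  "continuous_on S (\<lambda>z. profile p (exp (a * snd z)) (fst z :: 'a::real_normed_vector))"
proof -
  have "1 + (exp (a * snd z) * norm (fst z :: 'a))^2 \<noteq> 0" for z :: "'a \<times> real"
    by (smt (verit) zero_le_power2)
  then show ?thesis unfolding profile_def by (intro continuous_intros) auto
qed

lemma deriv_ratio_ge_half_if_profile_small:
  assumes "p > 0" and "profile p b x < 2 powr (-p/2)"
  shows "1/2 \<le> (b * norm x)^2 / (1 + (b * norm x)^2)"
proof -
  have "2 < 1 + (b * norm x)^2"
  proof (rule ccontr)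
    assume "\<not> 2 < 1 + (b * norm x)^2"
    then have "2 powr (-p/2) \<le> profile p b x"
      unfolding profile_def using assms(1) by (intro powr_mono2') (auto intro: add_pos_nonneg)
    then show False using assms(2) by simp
  qed
  then show ?thesis by (simp add: field_simps)
qed

lemma profile_second_diff_near:
  fixes x y :: "'a::real_inner"
  assumes p: "p \<ge> 0" and b: "b > 0" and small: "(b * norm y)^2 \<le> (1 + (b * norm x)^2) / 4"
  shows "\<bar>second_diff (profile p b) x y\<bar> \<le> 2 * (4*\<bar>(-p/2)*(-p/2-1)\<bar> + 2*\<bar>-p/2\<bar>) * b^2 * norm y^2 * ((1 + (b * norm x)^2) / 4) powr (-p/2 - 1)"
proof -
  let ?z = "b *\<^sub>R x" and ?w = "b *\<^sub>R y" and ?W = "1 + (b * norm x)^2"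
  have W: "?W = 1 + norm ?z^2" using b by (simp add: power_mult_distrib)
  have "\<bar>(1 + norm (?z + ?w)^2) powr (-p/2) + (1 + norm (?z - ?w)^2) powr (-p/2) - 2 * (1 + norm ?z^2) powr (-p/2)\<bar>
     \<le> 2 * ((4*\<bar>(-p/2)*(-p/2-1)\<bar> + 2*\<bar>-p/2\<bar>) * norm ?w^2 * (?W / 4) powr (-p/2 - 1))"
  proof (rule symmetric_difference_bracket_powr)
    fix s :: real assume s: "\<bar>s\<bar> \<le> 1"
    have "norm ?w^2 \<le> (1 + norm ?z^2) / 4" using small b by (simp add: power_mult_distrib)
    then have "(1 + norm ?z^2) / 4 \<le> 1 + norm (?z + s *\<^sub>R ?w)^2" by (rule bracket_segment_lower[OF _ s])
    then show "(1 + norm (?z + s *\<^sub>R ?w)^2) powr (-p/2 - 1) \<le> (?W / 4) powr (-p/2 - 1)"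
      unfolding W using p by (intro powr_mono2') (auto simp: add_pos_nonneg)
  qed
  moreover have "second_diff (profile p b) x y = - ((1 + norm (?z + ?w)^2) powr (-p/2) + (1 + norm (?z - ?w)^2) powr (-p/2) - 2 * (1 + norm ?z^2) powr (-p/2))"
    unfolding second_diff_def using b by (simp add: profile_scaleR algebra_simps)
  moreover have "norm ?w^2 = b^2 * norm y^2" using b by (simp add: power_mult_distrib)
  ultimately show ?thesis by (simp only: abs_minus_cancel)
qed

lemma profile_second_diff_far: "\<bar>second_diff (profile p b) x y\<bar> \<le> 2 * profile p b x + profile p b (x + y) + profile p b (x - y)"
  unfolding second_diff_def using profile_pos[of p b x] profile_pos[of p b "x+y"] profile_pos[of p b "x-y"] by linarith

lemma nn_integral_profile_finite:
  assumes p: "p > real DIM('a)"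
  shows "\<exists>I\<ge>0. (\<integral>\<^sup>+y. ennreal (profile p 1 (y::'a::euclidean_space)) \<partial>lborel) \<le> ennreal I"
proof -
  obtain Co where Co: "Co \<ge> 0" "\<And>R. R > 0 \<Longrightarrow> (\<integral>\<^sup>+y. indicator {R<..} (norm (y::'a)) * ennreal (norm y powr (-p)) \<partial>lborel)
     \<le> ennreal (R powr (-p + DIM('a)) * Co)"
    using nn_integral_norm_powr_outside_ball[of "-p", where 'a='a] p by auto
  have pt: "ennreal (profile p 1 y) \<le> indicator (cball 0 1) y + indicator {1<..} (norm y) * ennreal (norm y powr (-p))" for y :: 'a
  proof (cases "norm y \<le> 1")
    case True
    have "profile p 1 y \<le> 1 powr (-p/2)" unfolding profile_def using p
      by (intro powr_mono2') auto
    then have "profile p 1 y \<le> 1" by simp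
    then show ?thesis using True by (auto simp: indicator_def)
  next
    case False
    have "profile p 1 y \<le> (norm y^2) powr (-p/2)" unfolding profile_def using p False
      by (intro powr_mono2') auto
    also have "(norm y^2) powr (-p/2) = norm y powr (-p)"
    proof -
      have eq: "norm y^2 = norm y powr 2" using False by (simp add: powr_numeral)
      show ?thesis unfolding eq powr_powr by simp
    qed
    finally show ?thesis using False by (auto simp: indicator_def)
  qed
  have "(\<integral>\<^sup>+y. ennreal (profile p 1 (y::'a)) \<partial>lborel) \<le>
     (\<integral>\<^sup>+y. indicator (cball 0 1) y + indicator {1<..} (norm (y::'a)) * ennreal (norm y powr (-p)) \<partial>lborel)"
    by (rule nn_integral_mono) (rule pt)
  also have "\<dots> = emeasure lborel (cball (0::'a) 1) + (\<integral>\<^sup>+y. indicator {1<..} (norm (y::'a)) * ennreal (norm y powr (-p)) \<partial>lborel)"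
    by (subst nn_integral_add) (auto intro: borel_measurable_indicator)
  also have "\<dots> \<le> ennreal (measure lborel (cball (0::'a) 1)) + ennreal (1 powr (-p + DIM('a)) * Co)"
    using emeasure_lborel_cball_finite[of "0::'a" 1]
    by (intro add_mono Co) (auto simp: emeasure_eq_ennreal_measure)
  also have "\<dots> = ennreal (measure lborel (cball (0::'a) 1) + Co)" using Co by simp
  finally show ?thesis using Co by (intro exI[of _ "measure lborel (cball (0::'a) 1) + Co"]) auto
qed

lemma nn_integral_profile_translate:
  fixes x :: "'a::euclidean_space"
  assumes b: "b > 0" and I: "(\<integral>\<^sup>+y. ennreal (profile p 1 (y::'a)) \<partial>lborel) \<le> ennreal I"
  shows "(\<integral>\<^sup>+y. ennreal (profile p b (x + y)) \<partial>lborel) \<le> ennreal (b powr (- real DIM('a)) * I)"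
    and "(\<integral>\<^sup>+y. ennreal (profile p b (x - y)) \<partial>lborel) \<le> ennreal (b powr (- real DIM('a)) * I)"
proof -
  have sc: "(\<integral>\<^sup>+y. ennreal (profile p 1 (y::'a)) \<partial>lborel) = ennreal (\<bar>b\<bar>^DIM('a)) * (\<integral>\<^sup>+y. ennreal (profile p 1 (0 + b *\<^sub>R (y::'a))) \<partial>lborel)"
    by (rule nn_integral_lborel_affine) (use b in auto)
  have "profile p 1 (0 + b *\<^sub>R y) = profile p b y" for y :: 'a using b by (simp add: profile_def)
  then have sc': "ennreal (b^DIM('a)) * (\<integral>\<^sup>+y. ennreal (profile p b (y::'a)) \<partial>lborel) \<le> ennreal I"
    using sc I b by simp
  have main: "(\<integral>\<^sup>+y. ennreal (profile p b (y::'a)) \<partial>lborel) \<le> ennreal (b powr (- real DIM('a)) * I)"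
  proof -
    have "(\<integral>\<^sup>+y. ennreal (profile p b (y::'a)) \<partial>lborel) = ennreal (b powr (- real DIM('a))) * (ennreal (b^DIM('a)) * (\<integral>\<^sup>+y. ennreal (profile p b (y::'a)) \<partial>lborel))"
      using b by (simp add: mult.assoc[symmetric] ennreal_mult'[symmetric] powr_minus powr_realpow[symmetric] del: powr_realpow)
    also have "\<dots> \<le> ennreal (b powr (- real DIM('a))) * ennreal I"
      by (rule mult_left_mono[OF sc']) auto
    also have "\<dots> \<le> ennreal (b powr (- real DIM('a)) * I)"
      by (simp add: ennreal_mult'[symmetric])
    finally show ?thesis .
  qed
  have "(\<integral>\<^sup>+y. ennreal (profile p b (y::'a)) \<partial>lborel) = ennreal (\<bar>1\<bar>^DIM('a)) * (\<integral>\<^sup>+y. ennreal (profile p b (x + 1 *\<^sub>R (y::'a))) \<partial>lborel)"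
    by (rule nn_integral_lborel_affine) auto
  then show "(\<integral>\<^sup>+y. ennreal (profile p b (x + y)) \<partial>lborel) \<le> ennreal (b powr (- real DIM('a)) * I)"
    using main by simp
  have "(\<integral>\<^sup>+y. ennreal (profile p b (y::'a)) \<partial>lborel) = ennreal (\<bar>-1\<bar>^DIM('a)) * (\<integral>\<^sup>+y. ennreal (profile p b (x + (-1) *\<^sub>R (y::'a))) \<partial>lborel)"
    by (rule nn_integral_lborel_affine) auto
  then show "(\<integral>\<^sup>+y. ennreal (profile p b (x - y)) \<partial>lborel) \<le> ennreal (b powr (- real DIM('a)) * I)"
    using main by simp
qed

lemma near_scale_ineq:
  fixes W b \<alpha> p d :: real
  assumes W: "W \<ge> 1" and b: "0 < b" "b \<le> 1" and \<alpha>: "0 < \<alpha>" "\<alpha> < 2" and p: "p = d + \<alpha>" "d \<ge> 0"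
  shows "b^2 * (W/4) powr (-p/2-1) * sqrt (W/(4*b^2)) powr (2-\<alpha>) \<le> 4 powr (1 + p/2) * W powr (-p/2)"
proof -
  have Wp: "W > 0" using W by simp
  have pos: "b^2 * (W/4) powr (-p/2-1) * sqrt (W/(4*b^2)) powr (2-\<alpha>) > 0" using Wp b by simp
  have lnb: "ln b \<le> 0" using b by simp
  have lnW: "ln W \<ge> 0" using W by simp
  have ln4: "ln (4::real) > 0" by simp
  have "ln (b^2 * (W/4) powr (-p/2-1) * sqrt (W/(4*b^2)) powr (2-\<alpha>))
      = 2 * ln b + (-p/2-1) * (ln W - ln 4) + (2-\<alpha>) * ((ln W - ln 4 - 2 * ln b)/2)"
    using Wp b by (simp add: ln_mult ln_powr ln_div ln_sqrt ln_realpow)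
  also have "\<dots> = \<alpha> * ln b - (p/2 + \<alpha>/2) * ln W + (p/2 + \<alpha>/2) * ln 4"
    by (simp add: field_simps)
  also have "\<dots> \<le> (1 + p/2) * ln 4 + (-p/2) * ln W"
  proof -
    have "\<alpha> * ln b \<le> 0" using lnb \<alpha> by (simp add: mult_nonneg_nonpos)
    moreover have "\<alpha> * ln W \<ge> 0" using lnW \<alpha> by simp
    moreover have "\<alpha> * ln 4 \<le> 2 * ln 4" using ln4 \<alpha> by simp
    moreover have "(1 + p/2) * ln 4 + (-p/2) * ln W - (\<alpha> * ln b - (p/2 + \<alpha>/2) * ln W + (p/2 + \<alpha>/2) * ln 4)
        = ln 4 - (\<alpha> * ln 4)/2 + (\<alpha> * ln W)/2 - \<alpha> * ln b" by (simp add: field_simps)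
    ultimately show ?thesis by linarith
  qed
  also have "\<dots> = ln (4 powr (1 + p/2) * W powr (-p/2))"
    using Wp by (simp add: ln_mult ln_powr)
  finally show ?thesis using pos Wp by (subst ln_le_cancel_iff[symmetric]) auto
qed

lemma far_scale_ineq:
  fixes W b \<alpha> :: real
  assumes W: "W \<ge> 1" and b: "0 < b" "b \<le> 1" and \<alpha>: "0 < \<alpha>"
  shows "sqrt (W/(4*b^2)) powr (-\<alpha>) \<le> 2 powr \<alpha>"
proof -
  have Wp: "W > 0" using W by simp
  have lnb: "ln b \<le> 0" using b by simp
  have lnW: "ln W \<ge> 0" using W by simp
  have "ln (sqrt (W/(4*b^2)) powr (-\<alpha>)) = -\<alpha> * ((ln W - ln 4 - 2 * ln b) / 2)"
    using Wp b by (simp add: ln_mult ln_powr ln_div ln_sqrt ln_realpow)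
  also have "\<dots> = - (\<alpha> * ln W)/2 + (\<alpha> * ln 4)/2 + \<alpha> * ln b" by (simp add: field_simps)
  also have "\<dots> \<le> \<alpha> * ln 2"
  proof -
    have "ln (4::real) = 2 * ln 2" using ln_realpow[of 2 2] by simp
    then have "\<alpha> * ln 4 = 2 * (\<alpha> * ln 2)" by simp
    moreover have "\<alpha> * ln b \<le> 0" using lnb \<alpha> by (simp add: mult_nonneg_nonpos)
    moreover have "\<alpha> * ln W \<ge> 0" using lnW \<alpha> by simp
    ultimately show ?thesis by linarith
  qed
  also have "\<dots> = ln (2 powr \<alpha>)" by (simp add: ln_powr)
  finally show ?thesis using Wp b by (subst ln_le_cancel_iff[symmetric]) auto
qed

lemma tail_scale_ineq:
  fixes W b \<alpha> p d :: real
  assumes W: "W \<ge> 1" and b: "0 < b" "b \<le> 1" and \<alpha>: "0 < \<alpha>" and p: "p = d + \<alpha>" "d \<ge> 0"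
  shows "sqrt (W/(4*b^2)) powr (-p) * b powr (-d) \<le> 2 powr p * W powr (-p/2)"
proof -
  have Wp: "W > 0" using W by simp
  have lnb: "ln b \<le> 0" using b by simp
  have "ln (sqrt (W/(4*b^2)) powr (-p) * b powr (-d)) = -p * ((ln W - ln 4 - 2 * ln b) / 2) - d * ln b"
    using Wp b by (simp add: ln_mult ln_powr ln_div ln_sqrt ln_realpow)
  also have "\<dots> = - (p * ln W)/2 + (p * ln 4)/2 + \<alpha> * ln b"
    unfolding p by (simp add: field_simps)
  also have "\<dots> \<le> p * ln 2 + (-p/2) * ln W"
  proof -
    have "ln (4::real) = 2 * ln 2" using ln_realpow[of 2 2] by simp
    then have "p * ln 4 = 2 * (p * ln 2)" by simp
    moreover have "\<alpha> * ln b \<le> 0" using lnb \<alpha> by (simp add: mult_nonneg_nonpos)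
    moreover have "(-p/2) * ln W = - (p * ln W)/2" by simp
    ultimately show ?thesis by linarith
  qed
  also have "\<dots> = ln (2 powr p * W powr (-p/2))" using Wp by (simp add: ln_mult ln_powr)
  finally show ?thesis using Wp b by (subst ln_le_cancel_iff[symmetric]) auto
qed

definition profile_radius :: "real \<Rightarrow> 'a::real_normed_vector \<Rightarrow> real" where
  "profile_radius b x = sqrt ((1 + (b * norm x)^2) / (4 * b^2))"

lemma nn_integral_profile_second_diff_near:
  fixes \<alpha> :: real
  assumes \<alpha>: "0 < \<alpha>" "\<alpha> < 2"
  defines "p \<equiv> real DIM('a::euclidean_space) + \<alpha>"
  shows "\<exists>C\<ge>0. \<forall>b (x::'a). 0 < b \<longrightarrow> b \<le> 1 \<longrightarrow>
     (\<integral>\<^sup>+y. indicator {..profile_radius b x} (norm y) *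
        ennreal (\<bar>second_diff (profile p b) x y\<bar> * norm y powr (-p)) \<partial>lborel)
     \<le> ennreal (C * profile p b x)"
proof -
  have p: "p \<ge> 0" unfolding p_def using \<alpha> by simp
  obtain Cin where Cin: "Cin \<ge> 0" "\<And>R. R > 0 \<Longrightarrow> (\<integral>\<^sup>+y. indicator {..R} (norm (y::'a)) * ennreal (norm y powr (2-p)) \<partial>lborel)
     \<le> ennreal (R powr ((2-p) + DIM('a)) * Cin)"
    using nn_integral_norm_powr_inside_ball[of "2-p", where 'a='a] \<alpha> unfolding p_def by auto
  define cp where "cp = 2 * (4*\<bar>(-p/2)*(-p/2-1)\<bar> + 2*\<bar>-p/2\<bar>)"
  have cp: "cp \<ge> 0" unfolding cp_def by simp
  have "(\<integral>\<^sup>+y. indicator {..profile_radius b x} (norm y) *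
        ennreal (\<bar>second_diff (profile p b) x y\<bar> * norm y powr (-p)) \<partial>lborel)
     \<le> ennreal (cp * 4 powr (1 + p/2) * Cin * profile p b x)"
    if b: "0 < b" "b \<le> 1" for b and x :: 'a
  proof -
    define W where "W = 1 + (b * norm x)^2"
    define R where "R = profile_radius b x"
    define Kin where "Kin = cp * b^2 * (W/4) powr (-p/2 - 1)"
    have W: "W \<ge> 1" unfolding W_def by simp
    have R: "R > 0" "R = sqrt (W / (4 * b^2))" unfolding R_def profile_radius_def W_def using b by (simp_all add: add_pos_nonneg)
    have Kin: "Kin \<ge> 0" unfolding Kin_def using cp by simp
    have pt: "indicator {..R} (norm y) * ennreal (\<bar>second_diff (profile p b) x y\<bar> * norm y powr (-p))
        \<le> ennreal Kin * (indicator {..R} (norm y) * ennreal (norm y powr (2-p)))" for y :: 'a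
    proof (cases "y \<noteq> 0 \<and> norm y \<le> R")
      case True
      have "norm y^2 \<le> R^2" using True by (intro power_mono) auto
      then have "(b * norm y)^2 \<le> W / 4" using b W unfolding R(2) by (simp add: power_mult_distrib field_simps)
      then have "\<bar>second_diff (profile p b) x y\<bar> \<le> Kin * norm y^2"
        using profile_second_diff_near[OF p b(1), of y x] unfolding Kin_def cp_def W_def by (simp add: mult_ac)
      then have "\<bar>second_diff (profile p b) x y\<bar> * norm y powr (-p) \<le> Kin * norm y^2 * norm y powr (-p)"
        by (rule mult_right_mono) simp
      also have "\<dots> = Kin * (norm y^2 * norm y powr (-p))" by (simp add: mult.assoc)
      also have "norm y^2 * norm y powr (-p) = norm y powr (2-p)"
        using True powr_add[of "norm y" 2 "-p"] by (simp add: powr_numeral)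
      finally show ?thesis using True Kin by (simp add: ennreal_mult'[symmetric] ennreal_leI)
    qed auto
    have "(\<integral>\<^sup>+y. indicator {..R} (norm y) * ennreal (\<bar>second_diff (profile p b) x y\<bar> * norm y powr (-p)) \<partial>lborel)
        \<le> ennreal Kin * (\<integral>\<^sup>+y. indicator {..R} (norm (y::'a)) * ennreal (norm y powr (2-p)) \<partial>lborel)"
      by (subst nn_integral_cmult[symmetric]) (auto intro!: nn_integral_mono pt)
    also have "\<dots> \<le> ennreal Kin * ennreal (R powr (2 - \<alpha>) * Cin)"
      using Cin(2)[OF R(1)] unfolding p_def by (intro mult_left_mono) auto
    also have "\<dots> \<le> ennreal (cp * 4 powr (1 + p/2) * Cin * profile p b x)"
    proof -
      have "b^2 * (W/4) powr (-p/2-1) * R powr (2-\<alpha>) \<le> 4 powr (1 + p/2) * W powr (-p/2)"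
        unfolding R(2) by (rule near_scale_ineq[OF W b \<alpha>]) (auto simp: p_def)
      then have "Kin * (R powr (2 - \<alpha>) * Cin) \<le> cp * 4 powr (1 + p/2) * Cin * profile p b x"
        unfolding Kin_def profile_def W_def using cp Cin(1)
        by (simp add: mult_left_mono mult_right_mono mult_ac)
      then show ?thesis using Kin by (simp add: ennreal_mult'[symmetric] ennreal_leI)
    qed
    finally show ?thesis unfolding R_def .
  qed
  then show ?thesis using cp Cin(1) by (intro exI[of _ "cp * 4 powr (1 + p/2) * Cin"]) auto
qed

lemma nn_integral_profile_second_diff_far:
  fixes \<alpha> :: real
  assumes \<alpha>: "0 < \<alpha>" "\<alpha> < 2"
  defines "p \<equiv> real DIM('a::euclidean_space) + \<alpha>"
  shows "\<exists>C\<ge>0. \<forall>b (x::'a). 0 < b \<longrightarrow> b \<le> 1 \<longrightarrow>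
     (\<integral>\<^sup>+y. indicator {profile_radius b x<..} (norm y) *
        ennreal (\<bar>second_diff (profile p b) x y\<bar> * norm y powr (-p)) \<partial>lborel)
     \<le> ennreal (C * profile p b x)"
proof -
  have p: "p \<ge> 0" "p > real DIM('a)" unfolding p_def using \<alpha> by auto
  obtain Cout where Cout: "Cout \<ge> 0" "\<And>R. R > 0 \<Longrightarrow> (\<integral>\<^sup>+y. indicator {R<..} (norm (y::'a)) * ennreal (norm y powr (-p)) \<partial>lborel)
     \<le> ennreal (R powr (-p + DIM('a)) * Cout)"
    using nn_integral_norm_powr_outside_ball[of "-p", where 'a='a] p by auto
  obtain I where I: "I \<ge> 0" "(\<integral>\<^sup>+y. ennreal (profile p 1 (y::'a)) \<partial>lborel) \<le> ennreal I"
    using nn_integral_profile_finite[of p, where 'a='a] p by auto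
  have "(\<integral>\<^sup>+y. indicator {profile_radius b x<..} (norm y) *
        ennreal (\<bar>second_diff (profile p b) x y\<bar> * norm y powr (-p)) \<partial>lborel)
     \<le> ennreal ((2 * 2 powr \<alpha> * Cout + 2 * 2 powr p * I) * profile p b x)"
    if b: "0 < b" "b \<le> 1" for b and x :: 'a
  proof -
    define W where "W = 1 + (b * norm x)^2"
    define R where "R = profile_radius b x"
    have W: "W \<ge> 1" unfolding W_def by simp
    have R: "R > 0" "R = sqrt (W / (4 * b^2))"
      unfolding R_def profile_radius_def W_def using b by (simp_all add: add_pos_nonneg)
    have pos: "0 < profile p b z" for z :: 'a by (rule profile_pos)
    have pt: "indicator {R<..} (norm y) * ennreal (\<bar>second_diff (profile p b) x y\<bar> * norm y powr (-p))
        \<le> ennreal (2 * profile p b x) * (indicator {R<..} (norm y) * ennreal (norm y powr (-p)))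
          + ennreal (R powr (-p)) * ennreal (profile p b (x + y))
          + ennreal (R powr (-p)) * ennreal (profile p b (x - y))" for y :: 'a
    proof (cases "R < norm y")
      case True
      have le: "norm y powr (-p) \<le> R powr (-p)" using True R p by (intro powr_mono2') auto
      have "\<bar>second_diff (profile p b) x y\<bar> * norm y powr (-p)
          \<le> (2 * profile p b x + profile p b (x + y) + profile p b (x - y)) * norm y powr (-p)"
        by (intro mult_right_mono profile_second_diff_far) auto
      also have "\<dots> \<le> 2 * profile p b x * norm y powr (-p) + R powr (-p) * profile p b (x + y)
          + R powr (-p) * profile p b (x - y)"
        using le pos[of "x + y"] pos[of "x - y"] by (simp add: algebra_simps mult_left_mono add_mono)
      finally show ?thesis
        using True pos[of x] pos[of "x + y"] pos[of "x - y"]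
        by (simp add: ennreal_mult'[symmetric] ennreal_plus[symmetric] ennreal_leI del: ennreal_plus)
    qed simp
    have "(\<integral>\<^sup>+y. indicator {R<..} (norm y) *
        ennreal (\<bar>second_diff (profile p b) x y\<bar> * norm y powr (-p)) \<partial>lborel)
      \<le> (\<integral>\<^sup>+y. ennreal (2 * profile p b x) * (indicator {R<..} (norm y) * ennreal (norm y powr (-p)))
          + ennreal (R powr (-p)) * ennreal (profile p b (x + y))
          + ennreal (R powr (-p)) * ennreal (profile p b (x - y)) \<partial>lborel)"
      by (rule nn_integral_mono) (rule pt)
    also have "\<dots> = ennreal (2 * profile p b x) * (\<integral>\<^sup>+y. indicator {R<..} (norm (y::'a)) * ennreal (norm y powr (-p)) \<partial>lborel)
        + ennreal (R powr (-p)) * (\<integral>\<^sup>+y. ennreal (profile p b (x + y)) \<partial>lborel)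
        + ennreal (R powr (-p)) * (\<integral>\<^sup>+y. ennreal (profile p b (x - y)) \<partial>lborel)"
      unfolding profile_def by (simp add: nn_integral_add nn_integral_cmult)
    also have "\<dots> \<le> ennreal (2 * profile p b x) * ennreal (R powr (-\<alpha>) * Cout)
        + ennreal (R powr (-p)) * ennreal (b powr (- real DIM('a)) * I)
        + ennreal (R powr (-p)) * ennreal (b powr (- real DIM('a)) * I)"
      using Cout(2)[OF R(1)] nn_integral_profile_translate[OF b(1) I(2), of x]
      unfolding p_def by (intro add_mono mult_left_mono) auto
    also have "\<dots> \<le> ennreal ((2 * 2 powr \<alpha> * Cout + 2 * 2 powr p * I) * profile p b x)"
    proof -
      have "R powr (-\<alpha>) \<le> 2 powr \<alpha>" unfolding R(2) by (rule far_scale_ineq[OF W b \<alpha>(1)])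
      then have "2 * profile p b x * (R powr (-\<alpha>) * Cout) \<le> 2 * profile p b x * (2 powr \<alpha> * Cout)"
        using Cout(1) pos[of x] by (intro mult_left_mono mult_right_mono) auto
      moreover have "R powr (-p) * b powr (- real DIM('a)) \<le> 2 powr p * profile p b x"
        unfolding R(2) profile_def W_def[symmetric] by (rule tail_scale_ineq[OF W b \<alpha>(1)]) (auto simp: p_def)
      then have "2 * (R powr (-p) * (b powr (- real DIM('a)) * I)) \<le> 2 * (2 powr p * profile p b x * I)"
        using I(1) by (simp add: mult.assoc[symmetric] mult_right_mono)
      ultimately show ?thesis
        using Cout(1) I(1) pos[of x]
        by (simp add: ennreal_mult'[symmetric] ennreal_plus[symmetric] ennreal_leI algebra_simps del: ennreal_plus)
    qed
    finally show ?thesis unfolding R_def .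
  qed
  then show ?thesis using Cout(1) I(1) by (intro exI[of _ "2 * 2 powr \<alpha> * Cout + 2 * 2 powr p * I"]) auto
qed

lemma nn_integral_profile_second_diff:
  fixes \<alpha> :: real
  assumes \<alpha>: "0 < \<alpha>" "\<alpha> < 2"
  defines "p \<equiv> real DIM('a::euclidean_space) + \<alpha>"
  shows "\<exists>C\<ge>0. \<forall>b (x::'a). 0 < b \<longrightarrow> b \<le> 1 \<longrightarrow>
     (\<integral>\<^sup>+y. ennreal (\<bar>second_diff (profile p b) x y\<bar> * norm y powr (-p)) \<partial>lborel) \<le> ennreal (C * profile p b x)"
proof -
  obtain Cn where Cn: "Cn \<ge> 0" "\<And>b (x::'a). 0 < b \<Longrightarrow> b \<le> 1 \<Longrightarrow>
     (\<integral>\<^sup>+y. indicator {..profile_radius b x} (norm y) *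
        ennreal (\<bar>second_diff (profile p b) x y\<bar> * norm y powr (-p)) \<partial>lborel) \<le> ennreal (Cn * profile p b x)"
    using nn_integral_profile_second_diff_near[OF \<alpha>, where 'a='a] unfolding p_def by blast
  obtain Cf where Cf: "Cf \<ge> 0" "\<And>b (x::'a). 0 < b \<Longrightarrow> b \<le> 1 \<Longrightarrow>
     (\<integral>\<^sup>+y. indicator {profile_radius b x<..} (norm y) *
        ennreal (\<bar>second_diff (profile p b) x y\<bar> * norm y powr (-p)) \<partial>lborel) \<le> ennreal (Cf * profile p b x)"
    using nn_integral_profile_second_diff_far[OF \<alpha>, where 'a='a] unfolding p_def by blast
  have "(\<integral>\<^sup>+y. ennreal (\<bar>second_diff (profile p b) x y\<bar> * norm y powr (-p)) \<partial>lborel)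
      \<le> ennreal ((Cn + Cf) * profile p b x)" if b: "0 < b" "b \<le> 1" for b and x :: 'a
  proof -
    let ?R = "profile_radius b x" and ?f = "\<lambda>y. ennreal (\<bar>second_diff (profile p b) x y\<bar> * norm y powr (-p))"
    have [measurable]: "?f \<in> borel_measurable borel" unfolding second_diff_def profile_def by measurable
    have "(\<integral>\<^sup>+y. ?f y \<partial>lborel)
        = (\<integral>\<^sup>+y. indicator {..?R} (norm y) * ?f y \<partial>lborel) + (\<integral>\<^sup>+y. indicator {?R<..} (norm y) * ?f y \<partial>lborel)"
      by (subst nn_integral_add[symmetric]) (auto intro!: nn_integral_cong simp: indicator_def)
    also have "\<dots> \<le> ennreal (Cn * profile p b x) + ennreal (Cf * profile p b x)"
      using Cn(2)[OF b] Cf(2)[OF b] by (rule add_mono)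
    also have "\<dots> = ennreal ((Cn + Cf) * profile p b x)"
      using Cn(1) Cf(1) profile_pos[of p b x]
      by (simp add: ennreal_plus[symmetric] algebra_simps del: ennreal_plus)
    finally show ?thesis .
  qed
  then show ?thesis using Cn(1) Cf(1) by (intro exI[of _ "Cn + Cf"]) auto
qed

section \<open>The penalization\<close>

lemma powr_add_le:
  fixes a c \<beta> :: real
  assumes a: "a \<ge> 0" and c: "c \<ge> 0" and \<beta>: "0 < \<beta>" "\<beta> \<le> 1"
  shows "(a + c) powr \<beta> \<le> a powr \<beta> + c powr \<beta>"
proof (cases "a + c = 0")
  case True then show ?thesis using a c by simp
next
  case False
  then have s: "a + c > 0" using a c by simp
  define t where "t = a / (a + c)"
  have t: "0 \<le> t" "t \<le> 1" unfolding t_def using a c s by auto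
  have t1: "1 - t = c / (a + c)" unfolding t_def using s by (simp add: field_simps)
  have "t \<le> t powr \<beta>" using powr_mono'[of \<beta> 1 t] t \<beta> by simp
  moreover have "1 - t \<le> (1 - t) powr \<beta>" using powr_mono'[of \<beta> 1 "1-t"] t \<beta> by simp
  ultimately have "1 \<le> t powr \<beta> + (1 - t) powr \<beta>" by linarith
  then have "(a + c) powr \<beta> * 1 \<le> (a + c) powr \<beta> * (t powr \<beta> + (1 - t) powr \<beta>)"
    by (intro mult_left_mono) auto
  also have "\<dots> = a powr \<beta> + c powr \<beta>"
    unfolding t1 unfolding t_def using s a c by (simp add: powr_divide distrib_left)
  finally show ?thesis by simp
qed

lemma sqrt_one_plus_norm_add_le:
  fixes x y :: "'a::real_normed_vector"
  shows "sqrt (1 + norm (x + y)^2) \<le> sqrt (1 + norm x^2) + norm y"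
proof -
  have nx: "norm x \<le> sqrt (1 + norm x^2)" by (rule real_le_rsqrt) simp
  have "norm (x + y) \<le> norm x + norm y" by (rule norm_triangle_ineq)
  then have "norm (x + y)^2 \<le> (norm x + norm y)^2" by (intro power_mono) auto
  also have "\<dots> = norm x^2 + 2 * norm x * norm y + norm y^2" by (simp add: power2_eq_square algebra_simps)
  also have "\<dots> \<le> norm x^2 + 2 * sqrt (1 + norm x^2) * norm y + norm y^2"
    using nx by (simp add: mult_right_mono)
  finally have "1 + norm (x + y)^2 \<le> (sqrt (1 + norm x^2) + norm y)^2"
    by (simp add: power2_eq_square algebra_simps)
  then have "sqrt (1 + norm (x + y)^2) \<le> sqrt ((sqrt (1 + norm x^2) + norm y)^2)" by (rule real_sqrt_le_mono)
  also have "\<dots> = sqrt (1 + norm x^2) + norm y" by (simp add: add_nonneg_nonneg)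
  finally show ?thesis .
qed

definition penalty :: "real \<Rightarrow> 'a::real_normed_vector \<Rightarrow> real" where
  "penalty \<beta> x = (1 + norm x^2) powr (\<beta>/2)"

lemma penalty_sqrt: "penalty \<beta> x = sqrt (1 + norm x^2) powr \<beta>"
proof -
  have "sqrt (1 + norm x^2) = (1 + norm x^2) powr (1/2)" by (simp add: powr_half_sqrt add_nonneg_nonneg)
  then show ?thesis unfolding penalty_def by (simp add: powr_powr)
qed

lemma penalty_nonneg: "penalty \<beta> x \<ge> 0" unfolding penalty_def by simp

lemma continuous_on_penalty: "continuous_on UNIV (penalty \<beta> :: 'a::real_normed_vector \<Rightarrow> real)"
proof -
  have "1 + norm x^2 \<noteq> 0" for x :: 'a by (smt (verit) zero_le_power2)
  then show ?thesis unfolding penalty_def by (intro continuous_intros) auto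
qed

lemma norm_powr_le_penalty: "\<beta> > 0 \<Longrightarrow> norm x powr \<beta> \<le> penalty \<beta> x"
  unfolding penalty_sqrt by (intro powr_mono2) (auto intro: real_le_rsqrt)

lemma penalty_sublevel_bounded:
  assumes \<beta>: "\<beta> > 0" and \<delta>: "\<delta> > 0"
  shows "\<exists>\<rho>. \<forall>x::'a::real_normed_vector. \<delta> * penalty \<beta> x \<le> L \<longrightarrow> norm x \<le> \<rho>"
proof (intro exI allI impI)
  fix x :: 'a assume h: "\<delta> * penalty \<beta> x \<le> L"
  have "\<delta> * norm x powr \<beta> \<le> \<delta> * penalty \<beta> x" using norm_powr_le_penalty[OF \<beta>, of x] \<delta> by simp
  then have "\<delta> * norm x powr \<beta> \<le> L" using h by linarith
  then have "norm x powr \<beta> \<le> L / \<delta>" using \<delta> by (simp add: field_simps mult.commute)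
  then have "(norm x powr \<beta>) powr (1/\<beta>) \<le> (L / \<delta>) powr (1/\<beta>)" using \<beta> by (intro powr_mono2) auto
  then show "norm x \<le> (L / \<delta>) powr (1/\<beta>)" using \<beta> by (simp add: powr_powr)
qed

lemma penalty_add_le:
  assumes \<beta>: "0 < \<beta>" "\<beta> \<le> 1"
  shows "penalty \<beta> (x + y) \<le> penalty \<beta> x + norm y powr \<beta>"
proof -
  have "penalty \<beta> (x + y) \<le> (sqrt (1 + norm x^2) + norm y) powr \<beta>"
    unfolding penalty_sqrt using \<beta> sqrt_one_plus_norm_add_le[of x y] by (intro powr_mono2) auto
  also have "\<dots> \<le> penalty \<beta> x + norm y powr \<beta>"
    unfolding penalty_sqrt using \<beta> by (intro powr_add_le) auto
  finally show ?thesis .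
qed

lemma penalty_second_diff_ge:
  fixes x y :: "'a::real_inner"
  assumes \<beta>: "0 < \<beta>" "\<beta> \<le> 1"
  defines "\<gamma> \<equiv> \<beta> / 2"
  shows "- (if norm y \<le> 1 then 2 * (4*\<bar>\<gamma>*(\<gamma>-1)\<bar> + 2*\<bar>\<gamma>\<bar>) * norm y^2 else 2 * norm y powr \<beta>)
    \<le> second_diff (penalty \<beta>) x y"
proof (cases "norm y \<le> 1")
  case True
  have "\<bar>(1 + norm (x + y)^2) powr \<gamma> + (1 + norm (x - y)^2) powr \<gamma> - 2 * (1 + norm x^2) powr \<gamma>\<bar>
     \<le> 2 * ((4*\<bar>\<gamma>*(\<gamma>-1)\<bar> + 2*\<bar>\<gamma>\<bar>) * norm y^2 * 1)"
  proof (rule symmetric_difference_bracket_powr)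
    fix s :: real
    have "(1 + norm (x + s *\<^sub>R y)^2) powr (\<gamma> - 1) \<le> 1 powr (\<gamma> - 1)"
      using \<beta> unfolding \<gamma>_def by (intro powr_mono2') auto
    then show "(1 + norm (x + s *\<^sub>R y)^2) powr (\<gamma> - 1) \<le> 1" by simp
  qed
  moreover have "second_diff (penalty \<beta>) x y
      = - ((1 + norm (x + y)^2) powr \<gamma> + (1 + norm (x - y)^2) powr \<gamma> - 2 * (1 + norm x^2) powr \<gamma>)"
    unfolding second_diff_def penalty_def \<gamma>_def by simp
  ultimately show ?thesis using True by (simp add: abs_le_iff algebra_simps)
next
  case False
  have "penalty \<beta> (x + y) \<le> penalty \<beta> x + norm y powr \<beta>"
    and "penalty \<beta> (x + (- y)) \<le> penalty \<beta> x + norm (-y) powr \<beta>"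
    by (rule penalty_add_le[OF \<beta>])+
  then show ?thesis unfolding second_diff_def using False by simp
qed

lemma penalty_second_diff_lower:
  fixes \<alpha> :: real
  assumes \<alpha>: "0 < \<alpha>" "\<alpha> < 2"
  defines "p \<equiv> real DIM('a::euclidean_space) + \<alpha>"
  shows "\<exists>C2\<ge>0. \<exists>G. G \<in> borel_measurable borel \<and> (\<forall>y. G y \<ge> 0) \<and>
     (\<forall>x y::'a. - G y \<le> second_diff (penalty (\<alpha>/2)) x y) \<and>
     (\<integral>\<^sup>+y. ennreal (G y * norm y powr (-p)) \<partial>lborel) \<le> ennreal C2"
proof -
  define \<beta> where "\<beta> = \<alpha>/2"
  have \<beta>: "0 < \<beta>" "\<beta> \<le> 1" "\<beta> < \<alpha>" unfolding \<beta>_def using \<alpha> by auto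
  define \<gamma> where "\<gamma> = \<beta>/2"
  define cq where "cq = 2 * (4*\<bar>\<gamma>*(\<gamma>-1)\<bar> + 2*\<bar>\<gamma>\<bar>)"
  have cq: "cq \<ge> 0" unfolding cq_def by simp
  define G :: "'a \<Rightarrow> real" where "G y = (if norm y \<le> 1 then cq * norm y^2 else 2 * norm y powr \<beta>)" for y
  have Gm: "G \<in> borel_measurable borel" unfolding G_def by measurable
  have G0: "G y \<ge> 0" for y unfolding G_def using cq by simp
  have low: "- G y \<le> second_diff (penalty \<beta>) x y" for x y :: 'a
    using penalty_second_diff_ge[OF \<beta>(1,2), of y x] unfolding G_def cq_def \<gamma>_def by simp
  obtain Cin where Cin: "Cin \<ge> 0" "\<And>R. R > 0 \<Longrightarrow> (\<integral>\<^sup>+y. indicator {..R} (norm (y::'a)) * ennreal (norm y powr (2-p)) \<partial>lborel)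
     \<le> ennreal (R powr ((2-p) + DIM('a)) * Cin)"
    using nn_integral_norm_powr_inside_ball[of "2-p", where 'a='a] \<alpha> unfolding p_def by auto
  obtain Cout where Cout: "Cout \<ge> 0" "\<And>R. R > 0 \<Longrightarrow> (\<integral>\<^sup>+y. indicator {R<..} (norm (y::'a)) * ennreal (norm y powr (\<beta>-p)) \<partial>lborel)
     \<le> ennreal (R powr ((\<beta>-p) + DIM('a)) * Cout)"
    using nn_integral_norm_powr_outside_ball[of "\<beta>-p", where 'a='a] \<beta> unfolding p_def by auto
  have pt: "ennreal (G y * norm y powr (-p)) \<le> ennreal cq * (indicator {..1} (norm y) * ennreal (norm y powr (2-p)))
      + ennreal 2 * (indicator {1<..} (norm y) * ennreal (norm y powr (\<beta>-p)))" for y :: 'a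
  proof (cases "y = 0")
    case True then show ?thesis unfolding G_def by simp
  next
    case y0: False
    show ?thesis
    proof (cases "norm y \<le> 1")
      case True
      have e2: "norm y^2 = norm y powr 2" using y0 by (simp add: powr_numeral)
      have "norm y powr 2 * norm y powr (-p) = norm y powr (2 + -p)" by (rule powr_add[symmetric])
      then have f: "norm y powr (2-p) = norm y^2 * norm y powr (-p)" unfolding e2[symmetric] by simp
      have "G y * norm y powr (-p) = cq * norm y powr (2-p)" unfolding f G_def using True by (simp add: mult.assoc)
      then show ?thesis using True cq by (simp add: ennreal_mult')
    next
      case False
      have "norm y powr \<beta> * norm y powr (-p) = norm y powr (\<beta> + -p)" by (rule powr_add[symmetric])
      then have "G y * norm y powr (-p) = 2 * norm y powr (\<beta>-p)" unfolding G_def using False by (simp add: mult.assoc)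
      then show ?thesis using False by (simp add: ennreal_mult' indicator_def)
    qed
  qed
  have "(\<integral>\<^sup>+y. ennreal (G y * norm (y::'a) powr (-p)) \<partial>lborel) \<le>
     (\<integral>\<^sup>+y. ennreal cq * (indicator {..1} (norm y) * ennreal (norm (y::'a) powr (2-p)))
      + ennreal 2 * (indicator {1<..} (norm y) * ennreal (norm y powr (\<beta>-p))) \<partial>lborel)"
    by (rule nn_integral_mono) (rule pt)
  also have "\<dots> = ennreal cq * (\<integral>\<^sup>+y. indicator {..1} (norm y) * ennreal (norm (y::'a) powr (2-p)) \<partial>lborel)
      + ennreal 2 * (\<integral>\<^sup>+y. indicator {1<..} (norm (y::'a)) * ennreal (norm y powr (\<beta>-p)) \<partial>lborel)"
    by (simp add: nn_integral_add nn_integral_cmult)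
  also have "\<dots> \<le> ennreal cq * ennreal (1 powr ((2-p) + DIM('a)) * Cin) + ennreal 2 * ennreal (1 powr ((\<beta>-p) + DIM('a)) * Cout)"
    by (intro add_mono mult_left_mono Cin Cout) auto
  also have "\<dots> = ennreal (cq * Cin + 2 * Cout)"
  proof -
    have "ennreal (cq * Cin + 2 * Cout) = ennreal (cq * Cin) + ennreal (2 * Cout)"
      using cq Cin Cout by (intro ennreal_plus) auto
    moreover have "ennreal (2 * Cout) = ennreal 2 * ennreal Cout" by (rule ennreal_mult') simp
    moreover have "ennreal (cq * Cin) = ennreal cq * ennreal Cin" by (rule ennreal_mult') (use cq in simp)
    ultimately show ?thesis by simp
  qed
  finally show ?thesis using Gm G0 low cq Cin Cout unfolding \<beta>_def
    by (intro exI[of _ "cq * Cin + 2 * Cout"]) auto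
qed

section \<open>A comparison principle\<close>

lemma attains_max_on_strip:
  fixes \<Phi> :: "'a::euclidean_space \<Rightarrow> real \<Rightarrow> real"
  assumes cont: "continuous_on (UNIV \<times> {0..T}) (\<lambda>(x, t). \<Phi> x t)"
    and far: "\<And>x t. 0 \<le> t \<Longrightarrow> t \<le> T \<Longrightarrow> \<rho> < norm x \<Longrightarrow> \<Phi> x t < c"
    and y: "0 \<le> s" "s \<le> T" "c \<le> \<Phi> y s"
  obtains x0 t0 where "0 \<le> t0" "t0 \<le> T" "\<And>x t. 0 \<le> t \<Longrightarrow> t \<le> T \<Longrightarrow> \<Phi> x t \<le> \<Phi> x0 t0"
proof -
  define S where "S = cball (0::'a) \<rho> \<times> {0..T}"
  have "compact S" unfolding S_def by (intro compact_Times compact_cball compact_Icc)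
  moreover have "continuous_on S (\<lambda>(x, t). \<Phi> x t)"
    by (rule continuous_on_subset[OF cont]) (auto simp: S_def)
  moreover have yS: "(y, s) \<in> S"
    using far[of s y] y by (force simp: S_def)
  ultimately obtain x0 t0 where z0: "(x0, t0) \<in> S" "\<And>z. z \<in> S \<Longrightarrow> (\<lambda>(x, t). \<Phi> x t) z \<le> \<Phi> x0 t0"
    using continuous_attains_sup[of S "\<lambda>(x, t). \<Phi> x t"] by fastforce
  show thesis
  proof
    show "0 \<le> t0" "t0 \<le> T" using z0(1) by (auto simp: S_def)
    fix x t assume t: "0 \<le> t" "t \<le> T"
    show "\<Phi> x t \<le> \<Phi> x0 t0"
    proof (cases "norm x \<le> \<rho>")
      case True
      then show ?thesis using z0(2)[of "(x, t)"] t by (simp add: S_def)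
    next
      case False
      then show ?thesis using far[OF t, of x] y z0(2)[OF yS] by simp
    qed
  qed
qed

lemma deriv_nonneg_at_left_max:
  fixes \<phi> :: "real \<Rightarrow> real"
  assumes "(\<phi> has_real_derivative D) (at t)" and "a < t" and "\<And>s. a \<le> s \<Longrightarrow> s \<le> t \<Longrightarrow> \<phi> s \<le> \<phi> t"
  shows "0 \<le> D"
proof (rule ccontr)
  assume "\<not> 0 \<le> D"
  then obtain d where d: "d > 0" "\<And>h. h > 0 \<Longrightarrow> h < d \<Longrightarrow> \<phi> t < \<phi> (t - h)"
    using DERIV_neg_dec_left[OF assms(1)] by force
  define h where "h = min d (t - a) / 2"
  have "h > 0" "h < d" "a \<le> t - h" unfolding h_def using d assms(2) by (auto simp: min_def field_simps)
  then show False using d(2) assms(3)[of "t - h"] by fastforce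
qed

lemma penalized_max_point:
  fixes P Q :: "'a::euclidean_space \<Rightarrow> real \<Rightarrow> real" and \<psi> :: "'a \<Rightarrow> real"
  assumes contP: "continuous_on (UNIV \<times> {0..}) (\<lambda>(x, t). P x t)"
    and contQ: "continuous_on (UNIV \<times> {0..}) (\<lambda>(x, t). Q x t)"
    and bnd: "\<And>x t. 0 \<le> t \<Longrightarrow> \<bar>P x t\<bar> \<le> B \<and> \<bar>Q x t\<bar> \<le> B"
    and init: "\<And>x. P x 0 \<le> Q x 0"
    and \<psi>c: "continuous_on UNIV \<psi>" and \<psi>0: "\<And>x. \<psi> x \<ge> 0"
    and \<psi>grow: "\<And>L. \<exists>\<rho>. \<forall>x. \<psi> x \<le> L \<longrightarrow> norm x \<le> \<rho>"
    and k: "k \<ge> 0" and t: "0 \<le> t" and gap: "Q x t < P x t"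
  obtains \<epsilon> x0 t0 where "\<epsilon> > 0" "0 < t0" "t0 \<le> t" "Q x0 t0 < P x0 t0"
    "\<And>y s. 0 \<le> s \<Longrightarrow> s \<le> t \<Longrightarrow> exp (- k * s) * (P y s - Q y s) - \<epsilon> * \<psi> y - \<epsilon> * s
       \<le> exp (- k * t0) * (P x0 t0 - Q x0 t0) - \<epsilon> * \<psi> x0 - \<epsilon> * t0"
proof -
  define \<epsilon> where "\<epsilon> = exp (- k * t) * (P x t - Q x t) / (2 * (\<psi> x + t + 1))"
  have \<epsilon>: "\<epsilon> > 0" unfolding \<epsilon>_def using gap \<psi>0[of x] t by simp
  define \<Phi> where "\<Phi> y s = exp (- k * s) * (P y s - Q y s) - \<epsilon> * \<psi> y - \<epsilon> * s" for y s
  have \<Phi>x: "0 < \<Phi> x t"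
  proof -
    have "exp (- k * t) * (P x t - Q x t) = 2 * \<epsilon> * (\<psi> x + t + 1)"
      unfolding \<epsilon>_def using \<psi>0[of x] t by (simp add: field_simps)
    then have "\<Phi> x t = \<epsilon> * (\<psi> x + t + 2)" unfolding \<Phi>_def by (simp add: algebra_simps)
    then show ?thesis using \<epsilon> \<psi>0[of x] t by simp
  qed
  have \<Phi>_le: "\<Phi> y s \<le> 2 * B - \<epsilon> * \<psi> y" if "0 \<le> s" for y s
  proof -
    have "exp (- k * s) \<le> 1" using k that by simp
    moreover have "\<bar>P y s - Q y s\<bar> \<le> 2 * B" using bnd[OF that, of y] by linarith
    ultimately have "exp (- k * s) * (P y s - Q y s) \<le> 2 * B"
      by (smt (verit, best) exp_gt_zero mult_left_le_one_le abs_ge_self mult_left_mono)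
    then show ?thesis unfolding \<Phi>_def using \<epsilon> that by (smt (verit) mult_nonneg_nonneg)
  qed
  obtain \<rho> where \<rho>: "\<And>y. \<psi> y \<le> 2 * B / \<epsilon> \<Longrightarrow> norm y \<le> \<rho>" using \<psi>grow by blast
  have far: "\<Phi> y s < 0" if "0 \<le> s" "\<rho> < norm y" for y s
  proof -
    have "2 * B < \<epsilon> * \<psi> y" using \<rho>[of y] that \<epsilon> by (force simp: field_simps)
    then show ?thesis using \<Phi>_le[OF that(1), of y] by simp
  qed
  have cont\<Phi>: "continuous_on (UNIV \<times> {0..t}) (\<lambda>(y, s). \<Phi> y s)"
  proof -
    have sub: "UNIV \<times> {0..t} \<subseteq> UNIV \<times> {0::real..}" by auto
    show ?thesis unfolding \<Phi>_def case_prod_beta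
      by (intro continuous_intros continuous_on_subset[OF contP sub, unfolded case_prod_beta]
          continuous_on_subset[OF contQ sub, unfolded case_prod_beta] continuous_on_compose2[OF \<psi>c]) auto
  qed
  obtain x0 t0 where t0: "0 \<le> t0" "t0 \<le> t" and max: "\<And>y s. 0 \<le> s \<Longrightarrow> s \<le> t \<Longrightarrow> \<Phi> y s \<le> \<Phi> x0 t0"
    by (rule attains_max_on_strip[OF cont\<Phi>, where c=0 and \<rho>=\<rho> and s=t and y=x]) (use far t \<Phi>x in auto)
  have "0 < \<Phi> x0 t0" using max[of t x] t \<Phi>x by simp
  then have PQ: "Q x0 t0 < P x0 t0"
    using \<epsilon> \<psi>0[of x0] t0 unfolding \<Phi>_def by (smt (verit) mult_nonneg_nonneg zero_less_mult_iff exp_gt_zero)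
  moreover have "0 < t0"
  proof (rule ccontr)
    assume "\<not> 0 < t0"
    then have "t0 = 0" using t0 by simp
    then show False using PQ init[of x0] by simp
  qed
  ultimately show thesis using that[OF \<epsilon> _ t0(2)] max unfolding \<Phi>_def by blast
qed

lemma comparison_principle:
  fixes P Q :: "'a::euclidean_space \<Rightarrow> real \<Rightarrow> real" and \<psi> :: "'a \<Rightarrow> real"
  assumes contP: "continuous_on (UNIV \<times> {0..}) (\<lambda>(x, t). P x t)"
    and contQ: "continuous_on (UNIV \<times> {0..}) (\<lambda>(x, t). Q x t)"
    and bnd: "\<And>x t. 0 \<le> t \<Longrightarrow> \<bar>P x t\<bar> \<le> B \<and> \<bar>Q x t\<bar> \<le> B"
    and init: "\<And>x. P x 0 \<le> Q x 0"
    and \<psi>c: "continuous_on UNIV \<psi>" and \<psi>0: "\<And>x. \<psi> x \<ge> 0"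
    and \<psi>grow: "\<And>L. \<exists>\<rho>. \<forall>x. \<psi> x \<le> L \<longrightarrow> norm x \<le> \<rho>"
    and k: "k \<ge> 0"
    and step: "\<And>x0 t \<kappa>. 0 < t \<Longrightarrow> 0 < \<kappa> \<Longrightarrow>
       (\<forall>x. P x t - Q x t - \<kappa> * \<psi> x \<le> P x0 t - Q x0 t - \<kappa> * \<psi> x0) \<Longrightarrow> Q x0 t < P x0 t \<Longrightarrow>
       \<exists>P' Q'. ((\<lambda>s. P x0 s) has_real_derivative P') (at t) \<and> ((\<lambda>s. Q x0 s) has_real_derivative Q') (at t) \<and>
         P' - Q' \<le> k * (P x0 t - Q x0 t) + \<kappa> / 2"
    and t: "0 \<le> t"
  shows "P x t \<le> Q x t"
proof (rule ccontr)
  assume "\<not> P x t \<le> Q x t"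
  then obtain \<epsilon> x0 t0 where \<epsilon>: "\<epsilon> > 0" and t0: "0 < t0" "t0 \<le> t" and PQ: "Q x0 t0 < P x0 t0"
    and max: "\<And>y s. 0 \<le> s \<Longrightarrow> s \<le> t \<Longrightarrow> exp (- k * s) * (P y s - Q y s) - \<epsilon> * \<psi> y - \<epsilon> * s
       \<le> exp (- k * t0) * (P x0 t0 - Q x0 t0) - \<epsilon> * \<psi> x0 - \<epsilon> * t0"
    using penalized_max_point[OF contP contQ bnd init \<psi>c \<psi>0 \<psi>grow k t] by (metis not_le)
  define \<kappa> where "\<kappa> = \<epsilon> * exp (k * t0)"
  have \<kappa>: "\<kappa> > 0" unfolding \<kappa>_def using \<epsilon> by simp
  \<comment> \<open>at the fixed time \<open>t0\<close> the weight \<open>exp (- k t0)\<close> only rescales the penalization\<close>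
  have "P y t0 - Q y t0 - \<kappa> * \<psi> y \<le> P x0 t0 - Q x0 t0 - \<kappa> * \<psi> x0" for y
  proof -
    have "exp (k * t0) * (exp (- k * t0) * (P y t0 - Q y t0) - \<epsilon> * \<psi> y)
        \<le> exp (k * t0) * (exp (- k * t0) * (P x0 t0 - Q x0 t0) - \<epsilon> * \<psi> x0)"
      using max[of t0 y] t0 by (intro mult_left_mono) auto
    then show ?thesis unfolding \<kappa>_def by (simp add: algebra_simps exp_minus)
  qed
  then obtain P' Q' where P': "((\<lambda>s. P x0 s) has_real_derivative P') (at t0)"
    and Q': "((\<lambda>s. Q x0 s) has_real_derivative Q') (at t0)"
    and PQ': "P' - Q' \<le> k * (P x0 t0 - Q x0 t0) + \<kappa> / 2"
    using step[OF t0(1) \<kappa> _ PQ] by blast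
  have "((\<lambda>s. exp (- k * s) * (P x0 s - Q x0 s) - \<epsilon> * \<psi> x0 - \<epsilon> * s) has_real_derivative
      exp (- k * t0) * (P' - Q' - k * (P x0 t0 - Q x0 t0)) - \<epsilon>) (at t0)"
    by (rule derivative_eq_intros P' Q' refl | simp add: algebra_simps)+
  then have "0 \<le> exp (- k * t0) * (P' - Q' - k * (P x0 t0 - Q x0 t0)) - \<epsilon>"
    by (rule deriv_nonneg_at_left_max[OF _ t0(1)]) (use max t0 in auto)
  also have "\<dots> \<le> exp (- k * t0) * (\<kappa> / 2) - \<epsilon>" using PQ' by (simp add: mult_left_mono)
  also have "\<dots> = - \<epsilon> / 2" unfolding \<kappa>_def by (simp add: exp_minus field_simps)
  finally show False using \<epsilon> by simp
qed

section \<open>The standing hypotheses and the nonlocal operator\<close>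

lemma hyp_f_locally_lipschitz:
  assumes "hyp_f f \<mu>" and "R > 0"
  obtains k where "k \<ge> 0"
    "\<And>x s1 s2. \<bar>s1\<bar> \<le> R \<Longrightarrow> \<bar>s2\<bar> \<le> R \<Longrightarrow> \<bar>f x s1 - f x s2\<bar> \<le> k * \<bar>s1 - s2\<bar>"
proof -
  obtain L where L: "\<And>x s1 s2. \<bar>s1\<bar> \<le> R \<Longrightarrow> \<bar>s2\<bar> \<le> R \<Longrightarrow> \<bar>f x s1 - f x s2\<bar> \<le> L * \<bar>s1 - s2\<bar>"
    using assms unfolding hyp_f_def by meson
  show thesis
  proof (rule that)
    fix x s1 s2 assume "\<bar>s1\<bar> \<le> R" "\<bar>s2\<bar> \<le> R"
    then show "\<bar>f x s1 - f x s2\<bar> \<le> max L 0 * \<bar>s1 - s2\<bar>"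
      using L[of s1 s2 x] mult_right_mono[of L "max L 0" "\<bar>s1 - s2\<bar>"] by simp
  qed simp
qed

lemma hyp_f_growth:
  assumes "hyp_f f \<mu>"
  obtains L m where "L \<ge> 0" "m > 0" "\<And>x s. 0 \<le> s \<Longrightarrow> f x s \<le> L * s - m * s^2"
    "\<And>x s. 0 \<le> s \<Longrightarrow> s \<le> 1 \<Longrightarrow> - L * s \<le> f x s"
proof -
  have "\<exists>m M. m > 0 \<and> M > 0 \<and> (\<forall>x u. m * u\<^sup>2 \<le> \<mu> x * u - f x u \<and> \<mu> x * u - f x u \<le> M * u\<^sup>2)"
    using assms unfolding hyp_f_def by (elim conjE) assumption
  then obtain m M where m: "m > 0"
    and E: "\<And>x u. m * u^2 \<le> \<mu> x * u - f x u \<and> \<mu> x * u - f x u \<le> M * u^2"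
    by blast
  obtain k where "k \<ge> 0"
    and k: "\<And>x s1 s2. \<bar>s1\<bar> \<le> 1 \<Longrightarrow> \<bar>s2\<bar> \<le> 1 \<Longrightarrow> \<bar>f x s1 - f x s2\<bar> \<le> k * \<bar>s1 - s2\<bar>"
    by (rule hyp_f_locally_lipschitz[OF assms zero_less_one]) auto
  have "\<exists>M>0. \<forall>x. f x 0 = 0 \<and> (\<forall>s\<ge>M. f x s \<le> 0) \<and>
      (\<forall>s1 s2. 0 < s1 \<and> s1 < s2 \<longrightarrow> f x s2 / s2 < f x s1 / s1)"
    using assms unfolding hyp_f_def by (elim conjE) assumption
  then have f0: "f x 0 = 0" for x by blast
  \<comment> \<open>(H2') at \<open>u = 1\<close>, together with the Lipschitz bound on \<open>f(x, 1)\<close>, bounds \<open>\<mu>\<close>\<close>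
  have \<mu>: "\<bar>\<mu> x\<bar> \<le> \<bar>M\<bar> + \<bar>k\<bar>" for x
  proof -
    have "\<bar>f x 1\<bar> \<le> k" using k[of 1 0 x] f0[of x] by simp
    moreover have "m \<le> \<mu> x - f x 1" "\<mu> x - f x 1 \<le> M" using E[where x=x and u=1] by simp_all
    ultimately show ?thesis using m by linarith
  qed
  define L where "L = 2 * \<bar>M\<bar> + \<bar>k\<bar>"
  show thesis
  proof (rule that[of L m])
    fix x and s :: real assume s: "0 \<le> s"
    then have "\<mu> x * s \<le> L * s" using \<mu>[of x] unfolding L_def by (intro mult_right_mono) auto
    then show "f x s \<le> L * s - m * s^2" using E[where x=x and u=s] by linarith
    assume "s \<le> 1"
    then have "\<bar>M\<bar> * s^2 \<le> \<bar>M\<bar> * s" using s by (intro mult_left_mono) (auto simp: power2_eq_square mult_left_le_one_le)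
    moreover have "- (\<bar>M\<bar> + \<bar>k\<bar>) * s \<le> \<mu> x * s" using \<mu>[of x] s by (intro mult_right_mono) auto
    moreover have "M * s^2 \<le> \<bar>M\<bar> * s^2" by (simp add: mult_right_mono)
    ultimately show "- L * s \<le> f x s" using E[where x=x and u=s] unfolding L_def by (simp add: algebra_simps)
  qed (use m in \<open>auto simp: L_def\<close>)
qed

lemma hyp_K_kernel_bounds:
  fixes K :: "real^'n \<Rightarrow> real^'n \<Rightarrow> real"
  assumes "hyp_K \<alpha> K"
  obtains CK where "CK \<ge> 0" "\<And>x y. K x y > 0"
    "\<And>x y. y \<noteq> 0 \<Longrightarrow> K x y \<le> CK * norm y powr (- (real CARD('n) + \<alpha>))"
proof -
  obtain CK where CK: "CK > 0"
    "\<And>x y. y \<noteq> 0 \<Longrightarrow> K x y * norm y powr (real CARD('n) + \<alpha>) \<le> CK"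
    using assms unfolding hyp_K_def by blast
  have bound: "K x y \<le> CK * norm y powr (- (real CARD('n) + \<alpha>))" if "y \<noteq> 0" for x y
  proof -
    have "0 < norm y powr (real CARD('n) + \<alpha>)" using that by simp
    then have "K x y \<le> CK / norm y powr (real CARD('n) + \<alpha>)" using CK(2)[OF that, of x] by (simp add: field_simps)
    then show ?thesis unfolding powr_minus by (simp add: divide_inverse)
  qed
  show thesis
  proof (rule that)
    show "CK \<ge> 0" using CK(1) by simp
    have "\<forall>x y. K x y > 0" using assms unfolding hyp_K_def by (rule conjunct1)
    then show "K x y > 0" for x y by blast
  qed (fact bound)
qed

lemma is_solution_bounded:
  assumes "is_solution K f u0 u"
  obtains B where "\<And>x t. 0 \<le> t \<Longrightarrow> \<bar>u x t\<bar> \<le> B"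
proof -
  obtain B where "\<And>z. z \<in> (\<lambda>(x, t). u x t) ` (UNIV \<times> {0..}) \<Longrightarrow> norm z \<le> B"
    using assms unfolding is_solution_def bounded_iff by blast
  then show thesis using that[of B] by force
qed

lemma integral_ge_minus_majorant:
  fixes F G :: "'a::euclidean_space \<Rightarrow> real"
  assumes F: "integrable lborel F" and Gm: "G \<in> borel_measurable borel" and G0: "\<And>y. G y \<ge> 0"
    and le: "\<And>y. - G y \<le> F y" and int: "(\<integral>\<^sup>+y. ennreal (G y) \<partial>lborel) \<le> ennreal c" and c: "c \<ge> 0"
  shows "- c \<le> integral\<^sup>L lborel F"
proof -
  have Gi: "integrable lborel G"
    by (rule integrableI_bounded) (use Gm G0 int in \<open>auto simp: top_unique intro: le_less_trans[OF int]\<close>)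
  have "ennreal (integral\<^sup>L lborel G) = (\<integral>\<^sup>+y. ennreal (G y) \<partial>lborel)"
    using Gi G0 by (subst nn_integral_eq_integral) auto
  then have "integral\<^sup>L lborel G \<le> c" using int c by (simp add: ennreal_le_iff[symmetric] del: ennreal_le_iff)
  moreover have "integral\<^sup>L lborel (\<lambda>y. - G y) \<le> integral\<^sup>L lborel F"
    by (rule integral_mono) (use Gi F le in auto)
  ultimately show ?thesis by simp
qed

lemma Lalpha_ge_of_second_diff_ge:
  fixes K :: "real^'n \<Rightarrow> real^'n \<Rightarrow> real" and v :: "real^'n \<Rightarrow> real" and H :: "real^'n \<Rightarrow> real"
  assumes def: "Lalpha_defined K v x"
    and Kpos: "\<And>y. K x y > 0"
    and Kb: "\<And>y. y \<noteq> 0 \<Longrightarrow> K x y \<le> CK * norm y powr (-p)"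
    and Hm: "H \<in> borel_measurable borel" and H0: "\<And>y. H y \<ge> 0"
    and Hle: "\<And>y. - H y \<le> second_diff v x y"
    and int: "(\<integral>\<^sup>+y. ennreal (H y * norm y powr (-p)) \<partial>lborel) \<le> ennreal c" and c: "c \<ge> 0" and CK: "CK \<ge> 0"
  shows "- (CK / 2 * c) \<le> Lalpha K v x"
proof -
  define G where "G y = CK / 2 * (H y * norm y powr (-p))" for y
  have G0: "G y \<ge> 0" for y unfolding G_def using CK H0 by simp
  have Gm: "G \<in> borel_measurable borel" unfolding G_def using Hm by measurable
  have le: "- G y \<le> Lalpha_integrand K v x y" for y
  proof (cases "y = 0")
    case True then show ?thesis using G0[of y] unfolding Lalpha_integrand_def by simp
  next
    case False
    have "- (H y * (CK * norm y powr (-p))) \<le> - (H y * K x y)"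
      using Kb[OF False] H0[of y] by (simp add: mult_left_mono)
    also have "\<dots> \<le> second_diff v x y * K x y"
      using mult_right_mono[OF Hle[of y], of "K x y"] Kpos[of y] by simp
    finally show ?thesis unfolding G_def Lalpha_integrand_def second_diff_def by (simp add: algebra_simps)
  qed
  have "(\<integral>\<^sup>+y. ennreal (G y) \<partial>lborel) = ennreal (CK / 2) * (\<integral>\<^sup>+y. ennreal (H y * norm y powr (-p)) \<partial>lborel)"
    unfolding G_def using CK Hm by (subst nn_integral_cmult[symmetric]) (auto simp: ennreal_mult'[symmetric])
  also have "\<dots> \<le> ennreal (CK / 2) * ennreal c" by (intro mult_left_mono int) auto
  also have "\<dots> = ennreal (CK / 2 * c)" using CK by (simp add: ennreal_mult'[symmetric])
  finally have "- (CK / 2 * c) \<le> integral\<^sup>L lborel (Lalpha_integrand K v x)"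
    using def unfolding Lalpha_defined_def by (intro integral_ge_minus_majorant[OF _ Gm G0 le]) (use CK c in auto)
  then show ?thesis unfolding Lalpha_def .
qed

lemma Lalpha_integrand_uminus:
  "Lalpha_integrand K (\<lambda>z. - v z) x = (\<lambda>y. - Lalpha_integrand K v x y)"
  unfolding Lalpha_integrand_def by (rule ext) (simp add: field_simps)

lemma Lalpha_defined_uminus: "Lalpha_defined K (\<lambda>z. - v z) x \<longleftrightarrow> Lalpha_defined K v x"
  unfolding Lalpha_defined_def Lalpha_integrand_uminus by simp

lemma Lalpha_uminus: "Lalpha K (\<lambda>z. - v z) x = - Lalpha K v x"
  unfolding Lalpha_def Lalpha_integrand_uminus by simp

lemma Lalpha_ge_at_penalized_max:
  fixes K :: "real^'n \<Rightarrow> real^'n \<Rightarrow> real" and \<alpha> :: real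
  assumes \<alpha>: "0 < \<alpha>" "\<alpha> < 2" and K: "hyp_K \<alpha> K"
  defines "p \<equiv> real CARD('n) + \<alpha>"
  shows "\<exists>CL\<ge>0. \<exists>\<delta>>0. \<forall>v a b \<kappa> x0. 0 < b \<longrightarrow> b \<le> 1 \<longrightarrow> 0 < \<kappa> \<longrightarrow> Lalpha_defined K v x0 \<longrightarrow>
      (\<forall>x. v x - a * profile p b x - \<kappa> * (\<delta> * penalty (\<alpha>/2) x)
          \<le> v x0 - a * profile p b x0 - \<kappa> * (\<delta> * penalty (\<alpha>/2) x0)) \<longrightarrow>
      - (CL * \<bar>a\<bar> * profile p b x0 + \<kappa> / 2) \<le> Lalpha K v x0"
proof -
  obtain CK where CK: "CK \<ge> 0" and Kpos: "\<And>x y. K x y > 0"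
    and Kb: "\<And>x y. y \<noteq> 0 \<Longrightarrow> K x y \<le> CK * norm y powr (-p)"
    by (rule hyp_K_kernel_bounds[OF K, folded p_def]) blast
  have pdef: "p = real DIM(real^'n) + \<alpha>" unfolding p_def by simp
  obtain C1 where C1: "C1 \<ge> 0" "\<And>b (x::real^'n). 0 < b \<Longrightarrow> b \<le> 1 \<Longrightarrow>
     (\<integral>\<^sup>+y. ennreal (\<bar>second_diff (profile p b) x y\<bar> * norm y powr (-p)) \<partial>lborel) \<le> ennreal (C1 * profile p b x)"
    using nn_integral_profile_second_diff[OF \<alpha>, where 'a="real^'n"] unfolding pdef[symmetric] by blast
  obtain C2 G where C2: "C2 \<ge> 0" "G \<in> borel_measurable borel" "\<And>y. G y \<ge> 0"
    "\<And>x y::real^'n. - G y \<le> second_diff (penalty (\<alpha>/2)) x y"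
    "(\<integral>\<^sup>+y. ennreal (G y * norm y powr (-p)) \<partial>lborel) \<le> ennreal C2"
    using penalty_second_diff_lower[OF \<alpha>, where 'a="real^'n"] unfolding pdef[symmetric] by blast
  define \<delta> where "\<delta> = 1 / (CK * C2 + 1)"
  have "0 \<le> CK * C2" using CK C2(1) by simp
  then have \<delta>: "\<delta> > 0" "CK * \<delta> * C2 \<le> 1"
    unfolding \<delta>_def by (auto simp: field_simps)
  have "- (CK / 2 * C1 * \<bar>a\<bar> * profile p b x0 + \<kappa> / 2) \<le> Lalpha K v x0"
    if b: "0 < b" "b \<le> 1" and \<kappa>: "0 < \<kappa>" and def: "Lalpha_defined K v x0"
      and max: "\<forall>x. v x - a * profile p b x - \<kappa> * (\<delta> * penalty (\<alpha>/2) x)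
          \<le> v x0 - a * profile p b x0 - \<kappa> * (\<delta> * penalty (\<alpha>/2) x0)"
    for v a b \<kappa> x0
  proof -
    define H where "H y = \<bar>a\<bar> * \<bar>second_diff (profile p b) x0 y\<bar> + \<kappa> * \<delta> * G y" for y
    have Hm: "H \<in> borel_measurable borel"
      unfolding H_def second_diff_def profile_def using C2(2) by measurable
    have H0: "H y \<ge> 0" for y unfolding H_def using \<kappa> \<delta> C2(3)[of y] by simp
    have Hle: "- H y \<le> second_diff v x0 y" for y
    proof -
      have "a * second_diff (profile p b) x0 y + \<kappa> * \<delta> * second_diff (penalty (\<alpha>/2)) x0 y
          \<le> second_diff v x0 y"
        using max[rule_format, of "x0 + y"] max[rule_format, of "x0 - y"]
        unfolding second_diff_def by (simp add: algebra_simps)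
      moreover have "\<kappa> * \<delta> * (- G y) \<le> \<kappa> * \<delta> * second_diff (penalty (\<alpha>/2)) x0 y"
        using C2(4)[of y x0] \<kappa> \<delta>(1) by (intro mult_left_mono) auto
      moreover have "- (\<bar>a\<bar> * \<bar>second_diff (profile p b) x0 y\<bar>) \<le> a * second_diff (profile p b) x0 y"
        using abs_ge_minus_self[of "a * second_diff (profile p b) x0 y"] unfolding abs_mult by linarith
      ultimately show ?thesis unfolding H_def by linarith
    qed
    have "(\<integral>\<^sup>+y. ennreal (H y * norm y powr (-p)) \<partial>lborel)
        = (\<integral>\<^sup>+y. ennreal \<bar>a\<bar> * ennreal (\<bar>second_diff (profile p b) x0 y\<bar> * norm y powr (-p))
            + ennreal (\<kappa> * \<delta>) * ennreal (G y * norm y powr (-p)) \<partial>lborel)"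
      using \<kappa> \<delta>(1) C2(3) unfolding H_def
      by (intro nn_integral_cong)
         (simp add: ennreal_mult'[symmetric] ennreal_plus[symmetric] algebra_simps del: ennreal_plus)
    also have "\<dots> = ennreal \<bar>a\<bar> * (\<integral>\<^sup>+y. ennreal (\<bar>second_diff (profile p b) x0 y\<bar> * norm y powr (-p)) \<partial>lborel)
          + ennreal (\<kappa> * \<delta>) * (\<integral>\<^sup>+y. ennreal (G y * norm y powr (-p)) \<partial>lborel)"
      using C2(2) unfolding second_diff_def profile_def by (simp add: nn_integral_add nn_integral_cmult)
    also have "\<dots> \<le> ennreal \<bar>a\<bar> * ennreal (C1 * profile p b x0) + ennreal (\<kappa> * \<delta>) * ennreal C2"
      by (intro add_mono mult_left_mono C1(2) b C2(5)) auto
    also have "\<dots> = ennreal (\<bar>a\<bar> * (C1 * profile p b x0) + \<kappa> * \<delta> * C2)"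
      using C1 C2 \<kappa> \<delta> profile_pos[of p b x0]
      by (simp add: ennreal_mult'[symmetric] ennreal_plus[symmetric] del: ennreal_plus)
    finally have Hint: "(\<integral>\<^sup>+y. ennreal (H y * norm y powr (-p)) \<partial>lborel)
        \<le> ennreal (\<bar>a\<bar> * (C1 * profile p b x0) + \<kappa> * \<delta> * C2)" .
    have "- (CK / 2 * (\<bar>a\<bar> * (C1 * profile p b x0) + \<kappa> * \<delta> * C2)) \<le> Lalpha K v x0"
      using C1(1) C2(1) \<kappa> \<delta>(1) profile_pos[of p b x0]
      by (intro Lalpha_ge_of_second_diff_ge[OF def Kpos Kb[where x=x0] Hm H0 Hle Hint _ CK]) auto
    moreover have "CK / 2 * (\<kappa> * \<delta> * C2) \<le> \<kappa> / 2"
      using mult_left_mono[OF \<delta>(2), of "\<kappa> / 2"] \<kappa> by (simp add: algebra_simps)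
    ultimately show ?thesis by (simp add: algebra_simps)
  qed
  then show ?thesis using CK C1(1) \<delta>(1) by (intro exI[of _ "CK / 2 * C1"] exI[of _ \<delta>]) auto
qed

section \<open>Barriers and the main theorem\<close>

lemma solution_le_supersolution:
  fixes u V :: "real^'n \<Rightarrow> real \<Rightarrow> real"
  assumes sol: "is_solution K f u0 u" and f: "hyp_f f \<mu>"
    and contV: "continuous_on (UNIV \<times> {0..}) (\<lambda>(x, t). V x t)"
    and V_bdd: "\<And>x t. 0 \<le> t \<Longrightarrow> \<bar>V x t\<bar> \<le> BV"
    and init: "\<And>x. u x 0 \<le> V x 0"
    and \<delta>: "\<delta> > 0" and \<beta>: "\<beta> > 0"
    and super: "\<And>x0 t \<kappa>. 0 < t \<Longrightarrow> 0 < \<kappa> \<Longrightarrow>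
       (\<forall>x. u x t - V x t - \<kappa> * (\<delta> * penalty \<beta> x) \<le> u x0 t - V x0 t - \<kappa> * (\<delta> * penalty \<beta> x0)) \<Longrightarrow>
       V x0 t < u x0 t \<Longrightarrow>
       \<exists>V'. ((\<lambda>s. V x0 s) has_real_derivative V') (at t) \<and>
         f x0 (V x0 t) - V' \<le> Lalpha K (\<lambda>z. u z t) x0 + \<kappa> / 2"
    and t: "0 \<le> t"
  shows "u x t \<le> V x t"
proof -
  obtain Bu where Bu: "\<And>x t. 0 \<le> t \<Longrightarrow> \<bar>u x t\<bar> \<le> Bu" using is_solution_bounded[OF sol] by blast
  define R where "R = \<bar>Bu\<bar> + \<bar>BV\<bar> + 1"
  obtain k where "k \<ge> 0" and k: "\<And>x s1 s2. \<bar>s1\<bar> \<le> R \<Longrightarrow> \<bar>s2\<bar> \<le> R \<Longrightarrow>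
      \<bar>f x s1 - f x s2\<bar> \<le> k * \<bar>s1 - s2\<bar>"
    by (rule hyp_f_locally_lipschitz[OF f, of R]) (auto simp: R_def)
  show ?thesis
  proof (rule comparison_principle[where P=u and Q=V and B=R and \<psi>="\<lambda>x. \<delta> * penalty \<beta> x",
        OF _ contV _ init _ _ _ \<open>k \<ge> 0\<close> _ t])
    show "continuous_on (UNIV \<times> {0..}) (\<lambda>(x, t). u x t)" using sol unfolding is_solution_def by blast
    show "\<bar>u x t\<bar> \<le> R \<and> \<bar>V x t\<bar> \<le> R" if "0 \<le> t" for x t
      using Bu[OF that, of x] V_bdd[OF that, of x] unfolding R_def by auto
    show "continuous_on UNIV (\<lambda>x. \<delta> * penalty \<beta> x)" by (intro continuous_intros continuous_on_penalty)
    show "0 \<le> \<delta> * penalty \<beta> x" for x using \<delta> penalty_nonneg[of \<beta> x] by simp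
    show "\<exists>\<rho>. \<forall>x. \<delta> * penalty \<beta> x \<le> L \<longrightarrow> norm x \<le> \<rho>" for L by (rule penalty_sublevel_bounded[OF \<beta> \<delta>])
    fix x0 t \<kappa>
    assume t: "0 < t" and \<kappa>: "0 < \<kappa>" and gap: "V x0 t < u x0 t"
      and max: "\<forall>x. u x t - V x t - \<kappa> * (\<delta> * penalty \<beta> x) \<le> u x0 t - V x0 t - \<kappa> * (\<delta> * penalty \<beta> x0)"
    obtain ut where ut: "((\<lambda>s. u x0 s) has_real_derivative ut) (at t)"
      "ut + Lalpha K (\<lambda>z. u z t) x0 = f x0 (u x0 t)"
      using sol t unfolding is_solution_def by blast
    obtain V' where V': "((\<lambda>s. V x0 s) has_real_derivative V') (at t)"
      "f x0 (V x0 t) - V' \<le> Lalpha K (\<lambda>z. u z t) x0 + \<kappa> / 2"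
      using super[OF t \<kappa> max gap] by blast
    have "\<bar>u x0 t\<bar> \<le> R" "\<bar>V x0 t\<bar> \<le> R" using Bu[of t x0] V_bdd[of t x0] t unfolding R_def by auto
    from k[OF this, of x0] gap have "f x0 (u x0 t) - f x0 (V x0 t) \<le> k * (u x0 t - V x0 t)"
      by (simp add: abs_le_iff)
    with ut V' show "\<exists>P' Q'. ((\<lambda>s. u x0 s) has_real_derivative P') (at t) \<and>
        ((\<lambda>s. V x0 s) has_real_derivative Q') (at t) \<and> P' - Q' \<le> k * (u x0 t - V x0 t) + \<kappa> / 2"
      by (intro exI[of _ ut] exI[of _ V']) auto
  qed
qed

lemma subsolution_le_solution:
  fixes u W :: "real^'n \<Rightarrow> real \<Rightarrow> real"
  assumes sol: "is_solution K f u0 u" and f: "hyp_f f \<mu>"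
    and contW: "continuous_on (UNIV \<times> {0..}) (\<lambda>(x, t). W x t)"
    and W_bdd: "\<And>x t. 0 \<le> t \<Longrightarrow> \<bar>W x t\<bar> \<le> BW"
    and init: "\<And>x. W x 0 \<le> u x 0"
    and \<delta>: "\<delta> > 0" and \<beta>: "\<beta> > 0"
    and sub: "\<And>x0 t \<kappa>. 0 < t \<Longrightarrow> 0 < \<kappa> \<Longrightarrow>
       (\<forall>x. W x t - u x t - \<kappa> * (\<delta> * penalty \<beta> x) \<le> W x0 t - u x0 t - \<kappa> * (\<delta> * penalty \<beta> x0)) \<Longrightarrow>
       u x0 t < W x0 t \<Longrightarrow>
       \<exists>W'. ((\<lambda>s. W x0 s) has_real_derivative W') (at t) \<and>
         W' - f x0 (W x0 t) \<le> - Lalpha K (\<lambda>z. u z t) x0 + \<kappa> / 2"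
    and t: "0 \<le> t"
  shows "W x t \<le> u x t"
proof -
  obtain Bu where Bu: "\<And>x t. 0 \<le> t \<Longrightarrow> \<bar>u x t\<bar> \<le> Bu" using is_solution_bounded[OF sol] by blast
  define R where "R = \<bar>Bu\<bar> + \<bar>BW\<bar> + 1"
  obtain k where "k \<ge> 0" and k: "\<And>x s1 s2. \<bar>s1\<bar> \<le> R \<Longrightarrow> \<bar>s2\<bar> \<le> R \<Longrightarrow>
      \<bar>f x s1 - f x s2\<bar> \<le> k * \<bar>s1 - s2\<bar>"
    by (rule hyp_f_locally_lipschitz[OF f, of R]) (auto simp: R_def)
  show ?thesis
  proof (rule comparison_principle[where P=W and Q=u and B=R and \<psi>="\<lambda>x. \<delta> * penalty \<beta> x",
        OF contW _ _ init _ _ _ \<open>k \<ge> 0\<close> _ t])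
    show "continuous_on (UNIV \<times> {0..}) (\<lambda>(x, t). u x t)" using sol unfolding is_solution_def by blast
    show "\<bar>W x t\<bar> \<le> R \<and> \<bar>u x t\<bar> \<le> R" if "0 \<le> t" for x t
      using Bu[OF that, of x] W_bdd[OF that, of x] unfolding R_def by auto
    show "continuous_on UNIV (\<lambda>x. \<delta> * penalty \<beta> x)" by (intro continuous_intros continuous_on_penalty)
    show "0 \<le> \<delta> * penalty \<beta> x" for x using \<delta> penalty_nonneg[of \<beta> x] by simp
    show "\<exists>\<rho>. \<forall>x. \<delta> * penalty \<beta> x \<le> L \<longrightarrow> norm x \<le> \<rho>" for L by (rule penalty_sublevel_bounded[OF \<beta> \<delta>])
    fix x0 t \<kappa>
    assume t: "0 < t" and \<kappa>: "0 < \<kappa>" and gap: "u x0 t < W x0 t"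
      and max: "\<forall>x. W x t - u x t - \<kappa> * (\<delta> * penalty \<beta> x) \<le> W x0 t - u x0 t - \<kappa> * (\<delta> * penalty \<beta> x0)"
    obtain ut where ut: "((\<lambda>s. u x0 s) has_real_derivative ut) (at t)"
      "ut + Lalpha K (\<lambda>z. u z t) x0 = f x0 (u x0 t)"
      using sol t unfolding is_solution_def by blast
    obtain W' where W': "((\<lambda>s. W x0 s) has_real_derivative W') (at t)"
      "W' - f x0 (W x0 t) \<le> - Lalpha K (\<lambda>z. u z t) x0 + \<kappa> / 2"
      using sub[OF t \<kappa> max gap] by blast
    have "\<bar>W x0 t\<bar> \<le> R" "\<bar>u x0 t\<bar> \<le> R" using Bu[of t x0] W_bdd[of t x0] t unfolding R_def by auto
    from k[OF this, of x0] gap have "f x0 (W x0 t) - f x0 (u x0 t) \<le> k * (W x0 t - u x0 t)"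
      by (simp add: abs_le_iff)
    with ut W' show "\<exists>P' Q'. ((\<lambda>s. W x0 s) has_real_derivative P') (at t) \<and>
        ((\<lambda>s. u x0 s) has_real_derivative Q') (at t) \<and> P' - Q' \<le> k * (W x0 t - u x0 t) + \<kappa> / 2"
      by (intro exI[of _ W'] exI[of _ ut]) auto
  qed
qed

lemma logistic_supersolution_ineq:
  fixes F V L m CL B \<sigma> :: real
  assumes F: "F \<le> L * V - m * V^2" and V: "0 < V" and m: "0 < m" and LC: "0 \<le> L + CL"
    and B: "2 * (L + CL) \<le> B" and \<sigma>: "0 \<le> \<sigma>" "V < (L + CL) / m \<Longrightarrow> 1/2 \<le> \<sigma>"
  shows "F + CL * V \<le> B * V * \<sigma>"
proof (cases "V < (L + CL) / m")
  case True
  have "0 \<le> m * V^2" using m by simp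
  then have "F + CL * V \<le> (L + CL) * V" using F by (simp add: algebra_simps)
  also have "\<dots> \<le> B * V * (1/2)" using B V by (simp add: mult_right_mono)
  also have "\<dots> \<le> B * V * \<sigma>" using \<sigma>(2)[OF True] B LC V by (intro mult_left_mono) auto
  finally show ?thesis .
next
  case False
  then have "L + CL \<le> m * V" using m by (simp add: field_simps)
  then have "(L + CL) * V \<le> m * V^2" using V by (simp add: power2_eq_square mult_right_mono)
  then have "F + CL * V \<le> 0" using F by (simp add: algebra_simps)
  also have "0 \<le> B * V * \<sigma>" using B LC V \<sigma>(1) by simp
  finally show ?thesis .
qed

lemma solution_le_upper_barrier:
  fixes u :: "real^'n \<Rightarrow> real \<Rightarrow> real" and \<alpha> Bmin :: real
  assumes \<alpha>: "0 < \<alpha>" "\<alpha> < 2"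
    and f: "hyp_f f \<mu>" and K: "hyp_K \<alpha> K" and u0: "hyp_u0 \<alpha> u0" and sol: "is_solution K f u0 u"
  defines "p \<equiv> real CARD('n) + \<alpha>"
  obtains B C0 where "B > Bmin" "C0 \<ge> 1"
    "\<And>x t. 0 \<le> t \<Longrightarrow> u x t \<le> C0 * profile p (exp (- B / p * t)) x"
proof -
  have p: "p > 0" unfolding p_def using \<alpha> by simp
  obtain L m where L: "L \<ge> 0" and m: "m > 0" and f_le: "\<And>x s. 0 \<le> s \<Longrightarrow> f x s \<le> L * s - m * s^2"
    by (rule hyp_f_growth[OF f]) auto
  obtain CL \<delta> where CL: "CL \<ge> 0" and \<delta>: "\<delta> > 0" and nonlocal: "\<And>v a b \<kappa> x0. 0 < b \<Longrightarrow> b \<le> 1 \<Longrightarrow> 0 < \<kappa> \<Longrightarrow>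
      Lalpha_defined K v x0 \<Longrightarrow>
      (\<forall>x. v x - a * profile p b x - \<kappa> * (\<delta> * penalty (\<alpha>/2) x)
          \<le> v x0 - a * profile p b x0 - \<kappa> * (\<delta> * penalty (\<alpha>/2) x0)) \<Longrightarrow>
      - (CL * \<bar>a\<bar> * profile p b x0 + \<kappa> / 2) \<le> Lalpha K v x0"
    using Lalpha_ge_at_penalized_max[OF \<alpha> K, folded p_def] by blast
  obtain c2 where c2: "\<And>x. u0 x \<le> c2 / (1 + norm x powr p)"
    using u0 unfolding hyp_u0_def p_def by blast
  define \<theta> where "\<theta> = (L + CL) / m"
  define C0 where "C0 = 2 powr (p/2) * max 1 (max c2 \<theta>)"
  have two_p: "1 \<le> 2 powr (p/2)" using p by (intro ge_one_powr_ge_zero) auto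
  have C0: "C0 \<ge> 1" "c2 * 2 powr (p/2) \<le> C0" "\<theta> \<le> C0 * 2 powr (-p/2)"
  proof -
    show "C0 \<ge> 1" unfolding C0_def using mult_mono[OF two_p, of 1 "max 1 (max c2 \<theta>)"] by simp
    show "c2 * 2 powr (p/2) \<le> C0" unfolding C0_def using two_p by (simp add: mult.commute mult_left_mono)
    have "C0 * 2 powr (-p/2) = max 1 (max c2 \<theta>)"
      unfolding C0_def by (simp add: powr_minus field_simps)
    then show "\<theta> \<le> C0 * 2 powr (-p/2)" by simp
  qed
  define B where "B = \<bar>Bmin\<bar> + 1 + 2 * (L + CL)"
  have B: "B > Bmin" "2 * (L + CL) \<le> B" "B > 0" unfolding B_def using L CL by auto
  define V where "V x t = C0 * profile p (exp (- B / p * t)) x" for x :: "real^'n" and t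
  have V: "0 < V x t" "V x t \<le> C0" for x t
    unfolding V_def using C0(1) profile_pos[of p _ x] profile_le_1[of p _ x] p
    by (auto intro: mult_left_le)
  have "u x t \<le> V x t" if "0 \<le> t" for x t
  proof (rule solution_le_supersolution[OF sol f _ _ _ \<delta> _ _ that, where BV=C0])
    show "continuous_on (UNIV \<times> {0..}) (\<lambda>(x, t). V x t)"
      unfolding V_def case_prod_beta by (intro continuous_intros continuous_on_profile_exp)
    show "\<bar>V x t\<bar> \<le> C0" for x t using V[of x t] by simp
    show "u x 0 \<le> V x 0" for x
    proof -
      have "u x 0 \<le> c2 / (1 + norm x powr p)" using sol c2[of x] unfolding is_solution_def by simp
      also have "\<dots> = c2 * 2 powr (p/2) / (2 powr (p/2) * (1 + norm x powr p))" by simp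
      also have "\<dots> \<le> C0 / (2 powr (p/2) * (1 + norm x powr p))"
        using C0(2) by (intro divide_right_mono) (auto intro!: mult_nonneg_nonneg add_nonneg_nonneg)
      also have "\<dots> \<le> V x 0"
        unfolding V_def using mult_left_mono[OF profile_exp_ge[OF p, of B 0 x], of C0] C0(1) by simp
      finally show ?thesis .
    qed
    show "\<alpha> / 2 > 0" using \<alpha> by simp
    fix x0 t \<kappa>
    assume t: "0 < t" and \<kappa>: "0 < \<kappa>"
      and max: "\<forall>x. u x t - V x t - \<kappa> * (\<delta> * penalty (\<alpha>/2) x) \<le> u x0 t - V x0 t - \<kappa> * (\<delta> * penalty (\<alpha>/2) x0)"
    define b where "b = exp (- B / p * t)"
    define \<sigma> where "\<sigma> = (b * norm x0)^2 / (1 + (b * norm x0)^2)"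
    have b: "0 < b" "b \<le> 1" unfolding b_def using p t B(3) by (auto simp: divide_neg_pos)
    have "- (CL * V x0 t + \<kappa> / 2) \<le> Lalpha K (\<lambda>z. u z t) x0"
      using nonlocal[OF b \<kappa>, of "\<lambda>z. u z t" x0 C0] sol t max C0(1)
      unfolding V_def b_def is_solution_def by (simp add: mult.assoc)
    moreover have "f x0 (V x0 t) + CL * V x0 t \<le> B * V x0 t * \<sigma>"
    proof (rule logistic_supersolution_ineq[OF f_le V(1) m])
      show "V x0 t < (L + CL) / m \<Longrightarrow> 1/2 \<le> \<sigma>"
        unfolding \<sigma>_def
      proof (rule deriv_ratio_ge_half_if_profile_small[OF p])
        assume "V x0 t < (L + CL) / m"
        then have "C0 * profile p b x0 < C0 * 2 powr (-p/2)" using C0(3) unfolding V_def b_def \<theta>_def by simp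
        then show "profile p b x0 < 2 powr (-p/2)" using C0(1) by simp
      qed
    qed (use L CL B(2) less_imp_le[OF V(1)] in \<open>auto simp: \<sigma>_def\<close>)
    moreover have "((\<lambda>s. V x0 s) has_real_derivative B * V x0 t * \<sigma>) (at t)"
      using DERIV_cmult[OF profile_exp_time_deriv[OF p, of B x0 t], of C0]
      unfolding V_def \<sigma>_def b_def by (simp add: algebra_simps)
    ultimately show "\<exists>V'. ((\<lambda>s. V x0 s) has_real_derivative V') (at t) \<and>
        f x0 (V x0 t) - V' \<le> Lalpha K (\<lambda>z. u z t) x0 + \<kappa> / 2"
      by (intro exI[of _ "B * V x0 t * \<sigma>"]) auto
  qed
  then show thesis using that[of B C0] B(1) C0(1) unfolding V_def by auto
qed

lemma lower_barrier_le_solution: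
  fixes u :: "real^'n \<Rightarrow> real \<Rightarrow> real" and \<alpha> lam :: real
  assumes \<alpha>: "0 < \<alpha>" "\<alpha> < 2" and lam: "lam > 0"
    and f: "hyp_f f \<mu>" and K: "hyp_K \<alpha> K" and u0: "hyp_u0 \<alpha> u0" and sol: "is_solution K f u0 u"
  defines "p \<equiv> real CARD('n) + \<alpha>"
  obtains A c where "A > 0" "0 < c" "c \<le> 1"
    "\<And>x t. 0 \<le> t \<Longrightarrow> c * exp (- A * t) * profile p (exp (- lam / p * t)) x \<le> u x t"
proof -
  have p: "p > 0" unfolding p_def using \<alpha> by simp
  obtain L m where L: "L \<ge> 0" and f_ge: "\<And>x s. 0 \<le> s \<Longrightarrow> s \<le> 1 \<Longrightarrow> - L * s \<le> f x s"
    by (rule hyp_f_growth[OF f]) auto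
  obtain CL \<delta> where CL: "CL \<ge> 0" and \<delta>: "\<delta> > 0" and nonlocal: "\<And>v a b \<kappa> x0. 0 < b \<Longrightarrow> b \<le> 1 \<Longrightarrow> 0 < \<kappa> \<Longrightarrow>
      Lalpha_defined K v x0 \<Longrightarrow>
      (\<forall>x. v x - a * profile p b x - \<kappa> * (\<delta> * penalty (\<alpha>/2) x)
          \<le> v x0 - a * profile p b x0 - \<kappa> * (\<delta> * penalty (\<alpha>/2) x0)) \<Longrightarrow>
      - (CL * \<bar>a\<bar> * profile p b x0 + \<kappa> / 2) \<le> Lalpha K v x0"
    using Lalpha_ge_at_penalized_max[OF \<alpha> K, folded p_def] by blast
  obtain c1 where c1: "c1 > 0" "\<And>x. c1 / (1 + norm x powr p) \<le> u0 x"
    using u0 unfolding hyp_u0_def p_def by blast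
  define c where "c = min 1 (c1 / 2)"
  have c: "0 < c" "c \<le> 1" "2 * c \<le> c1" unfolding c_def using c1(1) by auto
  define A where "A = lam + CL + L + 1"
  have A: "A > 0" unfolding A_def using lam CL L by simp
  define W where "W x t = c * exp (- A * t) * profile p (exp (- lam / p * t)) x" for x :: "real^'n" and t
  have W: "0 < W x t" for x t unfolding W_def using c profile_pos[of p _ x] by simp
  have W_le: "W x t \<le> 1" if "0 \<le> t" for x t
  proof -
    have "exp (- A * t) * profile p (exp (- lam / p * t)) x \<le> 1 * 1"
      using A that profile_le_1[of p _ x] profile_pos[of p _ x] p by (intro mult_mono) (auto intro: less_imp_le)
    then show ?thesis unfolding W_def using c profile_pos[of p _ x] by (simp add: mult.assoc mult_le_one less_imp_le)
  qed
  have "W x t \<le> u x t" if "0 \<le> t" for x t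
  proof (rule subsolution_le_solution[OF sol f _ _ _ \<delta> _ _ that, where BW=1])
    show "continuous_on (UNIV \<times> {0..}) (\<lambda>(x, t). W x t)"
      unfolding W_def case_prod_beta by (intro continuous_intros continuous_on_profile_exp)
    show "\<bar>W x t\<bar> \<le> 1" if "0 \<le> t" for x t using W[of x t] W_le[OF that, of x] by simp
    show "W x 0 \<le> u x 0" for x
    proof -
      have "W x 0 \<le> c * (2 / (1 + norm x powr p))"
        unfolding W_def using mult_left_mono[OF profile_exp_le[OF p, of lam 0 x], of c] c(1) by simp
      also have "\<dots> \<le> c1 / (1 + norm x powr p)"
        using c(3) by (simp add: divide_right_mono add_nonneg_nonneg)
      also have "\<dots> \<le> u x 0" using sol c1(2)[of x] unfolding is_solution_def by simp
      finally show ?thesis .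
    qed
    show "\<alpha> / 2 > 0" using \<alpha> by simp
    fix x0 t \<kappa>
    assume t: "0 < t" and \<kappa>: "0 < \<kappa>"
      and max: "\<forall>x. W x t - u x t - \<kappa> * (\<delta> * penalty (\<alpha>/2) x) \<le> W x0 t - u x0 t - \<kappa> * (\<delta> * penalty (\<alpha>/2) x0)"
    define b where "b = exp (- lam / p * t)"
    define \<sigma> where "\<sigma> = (b * norm x0)^2 / (1 + (b * norm x0)^2)"
    define a where "a = c * exp (- A * t)"
    have b: "0 < b" "b \<le> 1" unfolding b_def using p t lam by (auto simp: divide_neg_pos)
    have \<sigma>: "\<sigma> \<le> 1" unfolding \<sigma>_def by (simp add: divide_le_eq_1 add_pos_nonneg)
    have Wa: "W z t = a * profile p b z" for z unfolding W_def a_def b_def ..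
    \<comment> \<open>the comparison point is a penalized maximum of \<open>- u\<close> against the barrier \<open>- a \<phi>\<close>\<close>
    have "- (CL * \<bar>- a\<bar> * profile p b x0 + \<kappa> / 2) \<le> Lalpha K (\<lambda>z. - u z t) x0"
      using nonlocal[OF b \<kappa>, of "\<lambda>z. - u z t" x0 "- a"] max sol t
      unfolding Lalpha_defined_uminus Wa is_solution_def by (simp add: algebra_simps)
    then have "- (CL * W x0 t + \<kappa> / 2) \<le> - Lalpha K (\<lambda>z. u z t) x0"
      using c unfolding Lalpha_uminus Wa a_def by simp
    moreover have "- A * W x0 t + lam * W x0 t * \<sigma> + CL * W x0 t \<le> f x0 (W x0 t)"
    proof -
      have "lam * W x0 t * \<sigma> \<le> lam * W x0 t" using \<sigma> lam W[of x0 t] by (simp add: mult_left_le)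
      moreover have "- L * W x0 t \<le> f x0 (W x0 t)" using f_ge W[of x0 t] W_le[of t x0] t by simp
      ultimately show ?thesis using W[of x0 t] unfolding A_def by (simp add: algebra_simps)
    qed
    moreover have "((\<lambda>s. W x0 s) has_real_derivative - A * W x0 t + lam * W x0 t * \<sigma>) (at t)"
      unfolding W_def \<sigma>_def b_def
      by (rule derivative_eq_intros profile_exp_time_deriv[OF p] refl | simp add: algebra_simps)+
    ultimately show "\<exists>W'. ((\<lambda>s. W x0 s) has_real_derivative W') (at t) \<and>
        W' - f x0 (W x0 t) \<le> - Lalpha K (\<lambda>z. u z t) x0 + \<kappa> / 2"
      by (intro exI[of _ "- A * W x0 t + lam * W x0 t * \<sigma>"]) auto
  qed
  then show thesis using that[of A c] A c unfolding W_def by auto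
qed

theorem proposition2p1:
  fixes \<alpha> :: real and lam1 :: real
    and K :: "real^'n \<Rightarrow> real^'n \<Rightarrow> real"
    and f :: "real^'n \<Rightarrow> real \<Rightarrow> real" and \<mu> :: "real^'n \<Rightarrow> real"
    and u0 :: "real^'n \<Rightarrow> real" and u :: "real^'n \<Rightarrow> real \<Rightarrow> real"
  assumes "0 < \<alpha>" and "\<alpha> < 2"
    and "hyp_f f \<mu>"
    and "hyp_K \<alpha> K"
    and "hyp_eig K \<mu> lam1"
    and "hyp_u0 \<alpha> u0"
    and "is_solution K f u0 u"
  shows "\<exists>B0 c0 C0 A0. B0 > \<bar>lam1\<bar> \<and> 0 < c0 \<and> c0 < C0 \<and> 0 < A0 \<and>
           (\<forall>x t. t \<ge> 0 \<longrightarrow>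
              c0 * exp (- A0 * t) / (1 + exp (- \<bar>lam1\<bar> * t) * norm x powr (real CARD('n) + \<alpha>)) \<le> u x t \<and>
              u x t \<le> C0 / (1 + exp (- B0 * t) * norm x powr (real CARD('n) + \<alpha>)))"
proof -
  define p where "p = real CARD('n) + \<alpha>"
  have p: "p > 0" using assms(1) unfolding p_def by simp
  have lam: "\<bar>lam1\<bar> > 0" using assms(5) unfolding hyp_eig_def by simp
  obtain B C where B: "B > \<bar>lam1\<bar>" and C: "C \<ge> 1"
    and upper: "\<And>x t. 0 \<le> t \<Longrightarrow> u x t \<le> C * profile p (exp (- B / p * t)) x"
    by (rule solution_le_upper_barrier[OF assms(1-4,6,7), folded p_def]) blast
  obtain A c where A: "A > 0" and c: "0 < c" "c \<le> 1"
    and lower: "\<And>x t. 0 \<le> t \<Longrightarrow> c * exp (- A * t) * profile p (exp (- \<bar>lam1\<bar> / p * t)) x \<le> u x t"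
    by (rule lower_barrier_le_solution[OF assms(1,2) lam assms(3,4,6,7), folded p_def]) blast
  have "c / 2 powr (p/2) \<le> 1"
    using c p by (simp add: divide_le_eq_1 order.trans[OF _ ge_one_powr_ge_zero])
  then have "c / 2 powr (p/2) < 2 * C" using C by linarith
  moreover have "u x t \<le> 2 * C / (1 + exp (- B * t) * norm x powr p)" if "0 \<le> t" for x t
    using order.trans[OF upper[OF that] mult_left_mono[OF profile_exp_le[OF p]]] C by (simp add: mult.commute)
  moreover have "c / 2 powr (p/2) * exp (- A * t) / (1 + exp (- \<bar>lam1\<bar> * t) * norm x powr p) \<le> u x t"
    if "0 \<le> t" for x t
    using order.trans[OF mult_left_mono[OF profile_exp_ge[OF p]] lower[OF that]] c by simp
  ultimately show ?thesis unfolding p_def[symmetric] using B A c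
    by (intro exI[of _ B] exI[of _ "c / 2 powr (p/2)"] exI[of _ "2 * C"] exI[of _ A]) auto
qed

end
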